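(* In the unit-cost arithmetic model, for every positive integer $N$, all the values $rt_n$, $f_n$, $f_{n,m}$, $f^\le_{n,m}$, $f_{n,m,\mu}$, $f^\le_{n,m,\mu}$ and $\binom{rt_m-1+\mu}{\mu}$, for all $n\in\{1,\dots,N\}$ and positive integers $m,\mu$ with $\mu m\le n$, can be computed using $O(N^2\log N)$ time and space.
   Context: All trees are unlabeled and unordered rooted trees; a forest is a disjoint union of rooted trees. For a forest $F$, $m(F)$ is the maximum number of vertices of a tree of $F$ and $\mu(F)$ the number of trees of $F$ with $m(F)$ vertices. $rt_n$: number of rooted trees on $n$ vertices; $f_n$: number of forests on $n$ vertices; $f_{n,m}$: number with $m(F)=m$; $f^\le_{n,m}$: number with $m(F)\le m$; $f_{n,m,\mu}$: number with $m(F)=m$, $\mu(F)=\mu$; $f^\le_{n,m,\mu}$: number with $m(F)=m$, $\mu(F)\le\mu$. Arithmetic operations on integers are assumed to take constant time, and each stored integer counts as one unit of space. *)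

theory Defs
  imports Complex_Main "HOL-Library.Multiset" "HOL-Library.Landau_Symbols"
begin

text \<open>An unlabeled unordered rooted tree is represented canonically as the multiset
of the subtrees rooted at the children of the root; two such trees are isomorphic
iff they are equal.\<close>

datatype rtree = Node "rtree multiset"

primrec tsize :: "rtree \<Rightarrow> nat" where
  "tsize (Node ts) = Suc (sum_mset (image_mset tsize ts))"

type_synonym forest = "rtree multiset"

definition fsize :: "forest \<Rightarrow> nat" where
  "fsize F = sum_mset (image_mset tsize F)"

definition mF :: "forest \<Rightarrow> nat" where
  "mF F = (if F = {#} then 0 else Max (tsize ` set_mset F))"

definition muF :: "forest \<Rightarrow> nat" where
  "muF F = size (filter_mset (\<lambda>t. tsize t = mF F) F)"

definition rt :: "nat \<Rightarrow> nat" where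
  "rt n = card {t. tsize t = n}"

definition f :: "nat \<Rightarrow> nat" where
  "f n = card {F. fsize F = n}"

definition f_m :: "nat \<Rightarrow> nat \<Rightarrow> nat" where
  "f_m n m = card {F. fsize F = n \<and> mF F = m}"

definition f_le_m :: "nat \<Rightarrow> nat \<Rightarrow> nat" where
  "f_le_m n m = card {F. fsize F = n \<and> mF F \<le> m}"

definition f_m_mu :: "nat \<Rightarrow> nat \<Rightarrow> nat \<Rightarrow> nat" where
  "f_m_mu n m \<mu> = card {F. fsize F = n \<and> mF F = m \<and> muF F = \<mu>}"

definition f_le_m_mu :: "nat \<Rightarrow> nat \<Rightarrow> nat \<Rightarrow> nat" where
  "f_le_m_mu n m \<mu> = card {F. fsize F = n \<and> mF F = m \<and> muF F \<le> \<mu>}"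

datatype query =
    QRt nat | QF nat | QFm nat nat | QFle nat nat
  | QFmmu nat nat nat | QFlemu nat nat nat | QBin nat nat

text \<open>QBin m mu stands for binom(rt_m - 1 + mu, mu); it is required whenever
mu*m \<le> n for some n \<le> N, i.e. whenever mu*m \<le> N.\<close>
fun valid_query :: "nat \<Rightarrow> query \<Rightarrow> bool" where
  "valid_query N (QRt n) = (1 \<le> n \<and> n \<le> N)"
| "valid_query N (QF n) = (1 \<le> n \<and> n \<le> N)"
| "valid_query N (QFm n m) = (1 \<le> n \<and> n \<le> N \<and> 1 \<le> m \<and> m \<le> n)"
| "valid_query N (QFle n m) = (1 \<le> n \<and> n \<le> N \<and> 1 \<le> m \<and> m \<le> n)"
| "valid_query N (QFmmu n m \<mu>) = (1 \<le> n \<and> n \<le> N \<and> 1 \<le> m \<and> 1 \<le> \<mu> \<and> \<mu> * m \<le> n)"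
| "valid_query N (QFlemu n m \<mu>) = (1 \<le> n \<and> n \<le> N \<and> 1 \<le> m \<and> 1 \<le> \<mu> \<and> \<mu> * m \<le> n)"
| "valid_query N (QBin m \<mu>) = (1 \<le> m \<and> 1 \<le> \<mu> \<and> \<mu> * m \<le> N)"

fun qval :: "query \<Rightarrow> int" where
  "qval (QRt n) = int (rt n)"
| "qval (QF n) = int (f n)"
| "qval (QFm n m) = int (f_m n m)"
| "qval (QFle n m) = int (f_le_m n m)"
| "qval (QFmmu n m \<mu>) = int (f_m_mu n m \<mu>)"
| "qval (QFlemu n m \<mu>) = int (f_le_m_mu n m \<mu>)"
| "qval (QBin m \<mu>) = int ((rt m - 1 + \<mu>) choose \<mu>)"

text \<open>Memory: cells indexed by naturals holding unbounded integers; each step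
costs one time unit, each memory cell ever accessed costs one unit of space.\<close>

datatype instr =
    LoadConst nat int
  | Add nat nat nat
  | Sub nat nat nat
  | Mul nat nat nat
  | Div nat nat nat            \<comment> \<open>floor division, x div 0 = 0\<close>
  | LoadInd nat nat
  | StoreInd nat nat
  | JumpPos nat nat
  | Jump nat
  | Halt

type_synonym prog = "instr list"
type_synonym state = "nat \<times> (nat \<Rightarrow> int)"

definition halted :: "prog \<Rightarrow> state \<Rightarrow> bool" where
  "halted P s = (fst s \<ge> length P \<or> P ! fst s = Halt)"

fun exec_instr :: "instr \<Rightarrow> nat \<Rightarrow> (nat \<Rightarrow> int) \<Rightarrow> state" where
  "exec_instr (LoadConst d c) pc M = (Suc pc, M(d := c))"
| "exec_instr (Add d a b) pc M = (Suc pc, M(d := M a + M b))"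
| "exec_instr (Sub d a b) pc M = (Suc pc, M(d := M a - M b))"
| "exec_instr (Mul d a b) pc M = (Suc pc, M(d := M a * M b))"
| "exec_instr (Div d a b) pc M = (Suc pc, M(d := M a div M b))"
| "exec_instr (LoadInd d a) pc M = (Suc pc, M(d := M (nat (M a))))"
| "exec_instr (StoreInd a b) pc M = (Suc pc, M(nat (M a) := M b))"
| "exec_instr (JumpPos a l) pc M = ((if M a > 0 then l else Suc pc), M)"
| "exec_instr (Jump l) pc M = (l, M)"
| "exec_instr Halt pc M = (pc, M)"

fun accessed_instr :: "instr \<Rightarrow> (nat \<Rightarrow> int) \<Rightarrow> nat set" where
  "accessed_instr (LoadConst d c) M = {d}"
| "accessed_instr (Add d a b) M = {d, a, b}"
| "accessed_instr (Sub d a b) M = {d, a, b}"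
| "accessed_instr (Mul d a b) M = {d, a, b}"
| "accessed_instr (Div d a b) M = {d, a, b}"
| "accessed_instr (LoadInd d a) M = {d, a, nat (M a)}"
| "accessed_instr (StoreInd a b) M = {a, b, nat (M a)}"
| "accessed_instr (JumpPos a l) M = {a}"
| "accessed_instr (Jump l) M = {}"
| "accessed_instr Halt M = {}"

definition step :: "prog \<Rightarrow> state \<Rightarrow> state" where
  "step P s = (if halted P s then s else exec_instr (P ! fst s) (fst s) (snd s))"

definition accessed :: "prog \<Rightarrow> state \<Rightarrow> nat set" where
  "accessed P s = (if halted P s then {} else accessed_instr (P ! fst s) (snd s))"

definition exec :: "prog \<Rightarrow> nat \<Rightarrow> state \<Rightarrow> state" where
  "exec P k s = (step P ^^ k) s"

definition used_cells :: "prog \<Rightarrow> nat \<Rightarrow> state \<Rightarrow> nat set" where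
  "used_cells P k s = insert 0 (\<Union>i<k. accessed P (exec P i s))"

definition init :: "nat \<Rightarrow> state" where
  "init N = (0, (\<lambda>_. 0)(0 := int N))"

end

theory Submission
  imports Defs
begin

text \<open>A forest F with m(F) = m and \<mu>(F) = \<mu> is the sum of a multiset of \<mu> trees
with m vertices and of a forest whose trees all have fewer than m vertices. Hence
  f_{n,m,\<mu>} = binom(rt_m - 1 + \<mu>, \<mu>) f^\<le>_{n-\<mu>m,m-1},
  f^\<le>_{n,m,\<mu>} = \<Sum>_{j\<le>\<mu>} f_{n,m,j},
  f^\<le>_{n,m} = f^\<le>_{n,m-1} + f^\<le>_{n,m,\<lfloor>n/m\<rfloor>},   f_{n,m} = f^\<le>_{n,m,\<lfloor>n/m\<rfloor>},
and rt_m = f_{m-1} = f^\<le>_{m-1,m-1}. Evaluating these for m = 1..N, n = 0..N and \<mu> = 1..\<lfloor>n/m\<rfloor>,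
with the binomial coefficients updated by binom(R+\<mu>,\<mu>) = binom(R+\<mu>-1,\<mu>-1)(R+\<mu>)/\<mu>, takes
O(1) work per triple (m,n,\<mu>), and there are \<Sum>_m (N+1)(N/m) = O(N^2 log N) of them.\<close>

section \<open>Forests\<close>

lemma tsize_ne_0 [simp]: "tsize t \<noteq> 0"
  by (cases t) auto

lemma tsize_Node: "tsize (Node F) = Suc (fsize F)"
  by (simp add: fsize_def)

lemma fsize_empty [simp]: "fsize {#} = 0"
  and fsize_add [simp]: "fsize (F + G) = fsize F + fsize G"
  and fsize_add_mset [simp]: "fsize (add_mset t F) = tsize t + fsize F"
  by (simp_all add: fsize_def)

lemma tsize_le_fsize: "t \<in># F \<Longrightarrow> tsize t \<le> fsize F"
  by (metis fsize_add_mset le_add1 multi_member_split)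

lemma size_le_fsize: "size F \<le> fsize F"
proof (induction F)
  case (add t F)
  then show ?case
    by (cases "tsize t") auto
qed simp

lemma fsize_uniform: "(\<forall>t\<in>#F. tsize t = m) \<Longrightarrow> fsize F = size F * m"
  by (induction F) auto

lemma fsize_filter_mset_le: "fsize (filter_mset P F) \<le> fsize F"
  by (metis fsize_add le_add1 multiset_partition)

lemma finite_fsize_le_if_finite_tsize_le:
  assumes "finite {t. tsize t \<le> n}"
  shows "finite {F. fsize F \<le> n}"
proof (rule finite_subset)
  show "{F. fsize F \<le> n} \<subseteq> (\<Union>k\<le>n. multisets_of_size {t. tsize t \<le> n} k)"
  proof
    fix F assume "F \<in> {F. fsize F \<le> n}"
    then have "set_mset F \<subseteq> {t. tsize t \<le> n}" "size F \<le> n"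
      using tsize_le_fsize[of _ F] size_le_fsize[of F] order_trans by auto
    then show "F \<in> (\<Union>k\<le>n. multisets_of_size {t. tsize t \<le> n} k)"
      by (auto simp: multisets_of_size_def)
  qed
  show "finite (\<Union>k\<le>n. multisets_of_size {t. tsize t \<le> n} k)"
    using assms by auto
qed

lemma finite_tsize_le: "finite {t. tsize t \<le> n}"
proof (induction n)
  case 0
  then show ?case
    by simp
next
  case (Suc n)
  have "{t. tsize t \<le> Suc n} \<subseteq> Node ` {F. fsize F \<le> n}"
  proof
    fix t assume "t \<in> {t. tsize t \<le> Suc n}"
    then show "t \<in> Node ` {F. fsize F \<le> n}"
      by (cases t) (auto simp: tsize_Node simp del: tsize.simps)
  qed
  then show ?case
    using finite_fsize_le_if_finite_tsize_le[OF Suc.IH] finite_subset by blast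
qed

lemma finite_fsize_le: "finite {F. fsize F \<le> n}"
  using finite_fsize_le_if_finite_tsize_le[OF finite_tsize_le] .

lemma finite_fsize_eq: "finite {F. fsize F = n \<and> P F}"
  by (rule finite_subset[OF _ finite_fsize_le[of n]]) auto

lemma finite_tsize_eq: "finite {t. tsize t = n}"
  by (rule finite_subset[OF _ finite_tsize_le[of n]]) auto

lemma rt_Suc: "rt (Suc n) = f n"
proof -
  have "{t. tsize t = Suc n} = Node ` {F. fsize F = n}"
  proof (intro set_eqI iffI)
    fix t assume "t \<in> {t. tsize t = Suc n}"
    then show "t \<in> Node ` {F. fsize F = n}"
      by (cases t) (auto simp: tsize_Node simp del: tsize.simps)
  qed (auto simp: tsize_Node simp del: tsize.simps)
  moreover have "inj Node"
    by (auto intro: injI)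
  ultimately show ?thesis
    unfolding rt_def f_def by (simp add: card_image inj_on_def)
qed

lemma f_ge_1: "f n \<ge> 1"
proof -
  have "fsize (replicate_mset n (Node {#})) = n"
    by (induction n) auto
  then have "{F. fsize F = n} \<noteq> {}"
    by blast
  then show ?thesis
    using finite_fsize_eq[of n "\<lambda>_. True"] unfolding f_def by (simp add: Suc_le_eq card_gt_0_iff)
qed

lemma rt_ge_1: "m \<ge> 1 \<Longrightarrow> rt m \<ge> 1"
  using rt_Suc[of "m - 1"] f_ge_1[of "m - 1"] by simp

lemma mF_le_iff: "mF F \<le> m \<longleftrightarrow> (\<forall>t\<in>#F. tsize t \<le> m)"
  unfolding mF_def by (cases "F = {#}") (auto simp: Max_le_iff)

lemma mF_le_fsize: "mF F \<le> fsize F"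
  using mF_le_iff tsize_le_fsize by blast

lemma f_eq_f_le_m: "f n = f_le_m n n"
  unfolding f_def f_le_m_def using mF_le_fsize by metis

lemma f_le_m_0: "f_le_m n 0 = (if n = 0 then 1 else 0)"
proof -
  have "mF F \<le> 0 \<longleftrightarrow> F = {#}" for F
    unfolding mF_le_iff by simp
  then have "{F. fsize F = n \<and> mF F \<le> 0} = (if n = 0 then {{#}} else {})"
    by auto
  then show ?thesis
    unfolding f_le_m_def by simp
qed

lemma mF_muF_iff:
  assumes "\<mu> \<ge> 1"
  shows "mF F = m \<and> muF F = \<mu> \<longleftrightarrow>
    (\<forall>t\<in>#F. tsize t \<le> m) \<and> size (filter_mset (\<lambda>t. tsize t = m) F) = \<mu>"
proof
  assume "mF F = m \<and> muF F = \<mu>"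
  then show "(\<forall>t\<in>#F. tsize t \<le> m) \<and> size (filter_mset (\<lambda>t. tsize t = m) F) = \<mu>"
    using mF_le_iff[of F m] by (auto simp: muF_def)
next
  assume h: "(\<forall>t\<in>#F. tsize t \<le> m) \<and> size (filter_mset (\<lambda>t. tsize t = m) F) = \<mu>"
  then have "filter_mset (\<lambda>t. tsize t = m) F \<noteq> {#}"
    using assms by (metis not_one_le_zero size_empty)
  then obtain t where "t \<in># filter_mset (\<lambda>t. tsize t = m) F"
    by (meson multiset_nonemptyE)
  then have t: "t \<in># F" "tsize t = m"
    by auto
  then have "Max (tsize ` set_mset F) = m"
    using h by (intro Max_eqI) auto
  then have "mF F = m"
    using t unfolding mF_def by auto
  then show "mF F = m \<and> muF F = \<mu>"
    using h by (simp add: muF_def)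
qed

lemma muF_ge_1: "m \<ge> 1 \<Longrightarrow> mF F = m \<Longrightarrow> muF F \<ge> 1"
proof -
  assume "m \<ge> 1" "mF F = m"
  then have ne: "F \<noteq> {#}"
    by (auto simp: mF_def)
  then have "Max (tsize ` set_mset F) \<in> tsize ` set_mset F"
    by (intro Max_in) auto
  then obtain t where "t \<in># F" "Max (tsize ` set_mset F) = tsize t"
    by (metis imageE)
  then have "t \<in># F" "tsize t = mF F"
    using ne by (simp_all add: mF_def)
  then have "filter_mset (\<lambda>t. tsize t = mF F) F \<noteq> {#}"
    by auto
  then show ?thesis
    unfolding muF_def nonempty_has_size by (simp add: Suc_le_eq)
qed

lemma muF_le_fsize_div_mF: "muF F \<le> fsize F div mF F"
proof -
  have "muF F * mF F = fsize (filter_mset (\<lambda>t. tsize t = mF F) F)"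
    unfolding muF_def by (subst fsize_uniform[of _ "mF F"]) auto
  also have "\<dots> \<le> fsize F"
    by (rule fsize_filter_mset_le)
  finally have "muF F * mF F \<le> fsize F" .
  moreover have "muF F = 0" if "mF F = 0"
    using that by (simp add: muF_def)
  ultimately show ?thesis
    by (cases "mF F = 0") (simp_all add: less_eq_div_iff_mult_less_eq)
qed

section \<open>Recurrences for the forest counts\<close>

lemma bij_betw_add_smaller_forest:
  assumes m: "m \<ge> 1" and \<mu>: "\<mu> \<ge> 1"
  shows "bij_betw (\<lambda>(X, G). X + G)
    (multisets_of_size {t. tsize t = m} \<mu> \<times> {G. fsize G = k \<and> mF G \<le> m - 1})
    {F. fsize F = \<mu> * m + k \<and> mF F = m \<and> muF F = \<mu>}"
proof -
  define A where "A = multisets_of_size {t. tsize t = m} \<mu>"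
  define B where "B = {G. fsize G = k \<and> mF G \<le> m - 1}"
  define S where "S = {F. fsize F = \<mu> * m + k \<and> mF F = m \<and> muF F = \<mu>}"
  have A_iff: "X \<in> A \<longleftrightarrow> (\<forall>t\<in>#X. tsize t = m) \<and> size X = \<mu>" for X
    by (auto simp: A_def multisets_of_size_def)
  have B_iff: "G \<in> B \<longleftrightarrow> fsize G = k \<and> (\<forall>t\<in>#G. tsize t < m)" for G
    using m by (auto simp: B_def mF_le_iff)
  have S_iff: "F \<in> S \<longleftrightarrow> fsize F = \<mu> * m + k \<and> (\<forall>t\<in>#F. tsize t \<le> m) \<and>
      size (filter_mset (\<lambda>t. tsize t = m) F) = \<mu>" for F
    using mF_muF_iff[OF \<mu>] unfolding S_def by blast
  have fsize_A: "fsize X = \<mu> * m" if "X \<in> A" for X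
    using that fsize_uniform[of X m] by (simp add: A_iff)
  have filter_id: "filter_mset P F = F" if "\<forall>t\<in>#F. P t" for P and F :: forest
    using that by (induction F) auto
  have split: "filter_mset (\<lambda>t. tsize t = m) (X + G) = X \<and> filter_mset (\<lambda>t. tsize t \<noteq> m) (X + G) = G"
    if "X \<in> A" "G \<in> B" for X G
  proof -
    have "\<forall>t\<in>#X. tsize t = m" "\<forall>t\<in>#G. tsize t \<noteq> m"
      using that by (auto simp: A_iff B_iff)
    then show ?thesis
      by (simp add: filter_id)
  qed
  have "inj_on (\<lambda>(X, G). X + G) (A \<times> B)"
    by (rule inj_onI) (clarsimp, metis split)
  moreover have "(\<lambda>(X, G). X + G) ` (A \<times> B) = S"
  proof (intro set_eqI iffI)
    fix F assume "F \<in> (\<lambda>(X, G). X + G) ` (A \<times> B)"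
    then obtain X G where XG: "X \<in> A" "G \<in> B" "F = X + G"
      by auto
    then show "F \<in> S"
      using conjunct1[OF split[OF XG(1,2)]] fsize_A[OF XG(1)]
      by (auto simp: S_iff A_iff B_iff less_imp_le)
  next
    fix F assume F: "F \<in> S"
    define X where "X = filter_mset (\<lambda>t. tsize t = m) F"
    define G where "G = filter_mset (\<lambda>t. tsize t \<noteq> m) F"
    have F_eq: "F = X + G"
      unfolding X_def G_def by (rule multiset_partition)
    have X: "X \<in> A"
      using F by (auto simp: S_iff A_iff X_def)
    moreover have "fsize F = fsize X + fsize G"
      using F_eq by simp
    then have "G \<in> B"
      using F fsize_A[OF X] by (auto simp: S_iff B_iff G_def order_le_neq_trans)
    ultimately show "F \<in> (\<lambda>(X, G). X + G) ` (A \<times> B)"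
      using F_eq by (auto intro!: image_eqI[of _ _ "(X, G)"])
  qed
  ultimately show ?thesis
    unfolding bij_betw_def A_def B_def S_def by blast
qed

lemma f_m_mu_eq:
  assumes "m \<ge> 1" "\<mu> \<ge> 1" "\<mu> * m \<le> n"
  shows "f_m_mu n m \<mu> = ((rt m - 1 + \<mu>) choose \<mu>) * f_le_m (n - \<mu> * m) (m - 1)"
proof -
  have "f_m_mu n m \<mu> =
      card (multisets_of_size {t. tsize t = m} \<mu> \<times> {G. fsize G = n - \<mu> * m \<and> mF G \<le> m - 1})"
    using bij_betw_same_card[OF bij_betw_add_smaller_forest[OF assms(1,2), of "n - \<mu> * m"]] assms(3)
    unfolding f_m_mu_def by simp
  also have "\<dots> = ((rt m + \<mu> - 1) choose \<mu>) * f_le_m (n - \<mu> * m) (m - 1)"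
    unfolding f_le_m_def rt_def by (simp add: card_cartesian_product card_multisets_of_size[OF finite_tsize_eq])
  finally show ?thesis
    using rt_ge_1[OF assms(1)] by simp
qed

lemma f_le_m_mu_eq_sum:
  assumes "m \<ge> 1"
  shows "f_le_m_mu n m \<mu> = (\<Sum>j=1..\<mu>. f_m_mu n m j)"
proof -
  have "{F. fsize F = n \<and> mF F = m \<and> muF F \<le> \<mu>} =
      (\<Union>j\<in>{1..\<mu>}. {F. fsize F = n \<and> mF F = m \<and> muF F = j})"
    using muF_ge_1[OF assms] by auto
  moreover have "card (\<Union>j\<in>{1..\<mu>}. {F. fsize F = n \<and> mF F = m \<and> muF F = j}) =
      (\<Sum>j=1..\<mu>. card {F. fsize F = n \<and> mF F = m \<and> muF F = j})"
    by (rule card_UN_disjoint) (auto intro: finite_fsize_eq)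
  ultimately show ?thesis
    unfolding f_le_m_mu_def f_m_mu_def by simp
qed

lemma f_le_m_eq_pred:
  assumes "m \<ge> 1"
  shows "f_le_m n m = f_le_m n (m - 1) + f_le_m_mu n m (n div m)"
proof -
  have "mF F \<le> m \<longleftrightarrow> mF F \<le> m - 1 \<or> (mF F = m \<and> muF F \<le> n div m)" if "fsize F = n" for F
    using muF_le_fsize_div_mF[of F] that assms by (cases "mF F = m") auto
  then have "{F. fsize F = n \<and> mF F \<le> m} =
      {F. fsize F = n \<and> mF F \<le> m - 1} \<union> {F. fsize F = n \<and> mF F = m \<and> muF F \<le> n div m}"
    by auto
  moreover have "card ({F. fsize F = n \<and> mF F \<le> m - 1} \<union> {F. fsize F = n \<and> mF F = m \<and> muF F \<le> n div m}) =
      card {F. fsize F = n \<and> mF F \<le> m - 1} + card {F. fsize F = n \<and> mF F = m \<and> muF F \<le> n div m}"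
    by (rule card_Un_disjoint) (use assms in \<open>auto intro: finite_fsize_eq\<close>)
  ultimately show ?thesis
    unfolding f_le_m_def f_le_m_mu_def by simp
qed

lemma f_m_eq_f_le_m_mu: "f_m n m = f_le_m_mu n m (n div m)"
proof -
  have "{F. fsize F = n \<and> mF F = m} = {F. fsize F = n \<and> mF F = m \<and> muF F \<le> n div m}"
    using muF_le_fsize_div_mF by fastforce
  then show ?thesis
    unfolding f_m_def f_le_m_mu_def by simp
qed

lemma choose_eq_div:
  assumes "\<mu> \<ge> 1"
  shows "int ((R + (\<mu> - 1)) choose (\<mu> - 1)) * (int R + int \<mu>) div int \<mu> = int ((R + \<mu>) choose \<mu>)"
proof -
  have "((R + \<mu>) choose \<mu>) * \<mu> = ((R + (\<mu> - 1)) choose (\<mu> - 1)) * (R + \<mu>)"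
    using times_binomial_minus1_eq[of \<mu> "R + \<mu>"] assms by (simp add: mult.commute)
  then have "int ((R + (\<mu> - 1)) choose (\<mu> - 1)) * (int R + int \<mu>) = int ((R + \<mu>) choose \<mu>) * int \<mu>"
    by (metis of_nat_add of_nat_mult)
  then show ?thesis
    using assms by simp
qed

section \<open>Running programs within a time and space budget\<close>

lemma exec_0 [simp]: "exec P 0 s = s"
  by (simp add: exec_def)

lemma exec_Suc: "exec P (Suc k) s = exec P k (step P s)"
  by (simp add: exec_def funpow_Suc_right del: funpow.simps)

lemma exec_add: "exec P (a + b) s = exec P b (exec P a s)"
  by (simp add: exec_def funpow_add add.commute[of a b])

lemma exec_halted: "halted P s \<Longrightarrow> exec P k s = s"
  by (induction k) (simp_all add: exec_Suc step_def)

definition accessed_upto :: "prog \<Rightarrow> nat \<Rightarrow> state \<Rightarrow> nat set" where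
  "accessed_upto P k s = (\<Union>i<k. accessed P (exec P i s))"

lemma accessed_upto_0 [simp]: "accessed_upto P 0 s = {}"
  by (simp add: accessed_upto_def)

lemma accessed_upto_Suc: "accessed_upto P (Suc k) s = accessed P s \<union> accessed_upto P k (step P s)"
  unfolding accessed_upto_def lessThan_Suc_eq_insert_0 by (simp add: exec_Suc)

lemma accessed_upto_add:
  "accessed_upto P (a + b) s = accessed_upto P a s \<union> accessed_upto P b (exec P a s)"
  by (induction a arbitrary: s) (auto simp: accessed_upto_Suc exec_Suc)

lemma accessed_upto_halted: "halted P s \<Longrightarrow> accessed_upto P k s = {}"
  by (induction k) (simp_all add: accessed_upto_Suc step_def accessed_def)

definition runs :: "prog \<Rightarrow> nat set \<Rightarrow> state \<Rightarrow> nat \<Rightarrow> state \<Rightarrow> bool" where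
  "runs P C s t s' \<longleftrightarrow> (\<exists>k\<le>t. exec P k s = s' \<and> accessed_upto P k s \<subseteq> C)"

lemma runs_trans: "runs P C s t\<^sub>1 s\<^sub>1 \<Longrightarrow> runs P C s\<^sub>1 t\<^sub>2 s\<^sub>2 \<Longrightarrow> runs P C s (t\<^sub>1 + t\<^sub>2) s\<^sub>2"
  unfolding runs_def by (metis add_le_mono exec_add accessed_upto_add Un_least)

lemma runs_mono: "runs P C s t s' \<Longrightarrow> t \<le> t' \<Longrightarrow> runs P C s t' s'"
  unfolding runs_def by (metis le_trans)

lemma runs_to_halted:
  assumes "runs P C s t s'" "halted P s'"
  shows "exec P t s = s' \<and> accessed_upto P t s \<subseteq> C"
proof -
  obtain k where k: "k \<le> t" "exec P k s = s'" "accessed_upto P k s \<subseteq> C"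
    using assms(1) unfolding runs_def by blast
  then have "t = k + (t - k)"
    by simp
  then show ?thesis
    using k assms(2) by (metis exec_add accessed_upto_add exec_halted accessed_upto_halted sup_bot_right)
qed

text \<open>A device for symbolic execution: the simplifier unfolds \<open>exec_checked\<close> one step at a time,
  checking each accessed cell against \<open>C\<close> on the way.\<close>

definition exec_checked :: "prog \<Rightarrow> nat set \<Rightarrow> nat \<Rightarrow> state \<Rightarrow> state option" where
  "exec_checked P C k s = (if accessed_upto P k s \<subseteq> C then Some (exec P k s) else None)"

lemma exec_checked_0: "exec_checked P C 0 s = Some s"
  by (simp add: exec_checked_def)

lemma exec_checked_Suc:
  "exec_checked P C (Suc k) s = (if accessed P s \<subseteq> C then exec_checked P C k (step P s) else None)"
  by (simp add: exec_checked_def accessed_upto_Suc exec_Suc)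

lemma exec_checked_numeral:
  "exec_checked P C (numeral n) s =
    (if accessed P s \<subseteq> C then exec_checked P C (pred_numeral n) (step P s) else None)"
  by (simp add: numeral_eq_Suc exec_checked_Suc)

lemma runs_if_exec_checked:
  assumes "case exec_checked P C k s of None \<Rightarrow> False | Some s' \<Rightarrow> fst s' = pc \<and> Q (snd s')"
  shows "\<exists>M'. runs P C s k (pc, M') \<and> Q M'"
proof -
  have "accessed_upto P k s \<subseteq> C" "fst (exec P k s) = pc" "Q (snd (exec P k s))"
    using assms by (auto simp: exec_checked_def split: if_splits)
  then show ?thesis
    unfolding runs_def by (metis prod.collapse order_refl)
qed

section \<open>The program\<close>

text \<open>Registers (cells 0 to 15): 0 holds the input N, 1 the constant 1, 2 m, 3 n, 4 \<mu>,
  5 R = rt_m - 1, 6 b, 7 s, 11 K = N + 1, 12 K^2, 13 the constant 8, and 14 the difference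
  n - \<mu>m; cells 8, 9, 10 and 15 are scratch. The entry of the table T with key (t, a, b, c) is
  stored at \<open>table_addr K (t, a, b, c)\<close>. The program runs
    T[0,0,0,0] := 1;
    for m = 1..N:                                                       (test at pc 7)
      R := T[0,m-1,m-1,0] - 1;
      for n = 0..N:                                                     (test at pc 21)
        s := 0; b := 1; \<mu> := 1;
        while \<mu>m \<le> n:                                                   (test at pc 28)
          b := b (R + \<mu>) div \<mu>;  T[3,0,m,\<mu>] := b;
          T[1,n,m,\<mu>] := b T[0,n-\<mu>m,m-1,0];  s := s + T[1,n,m,\<mu>];  T[2,n,m,\<mu>] := s;
          \<mu> := \<mu> + 1
        T[0,n,m,0] := T[0,n,m-1,0] + s                                  (pc 65)
    halt                                                                (pc 85)
  so that in the end T[0,n,m,0] = f^\<le>_{n,m}, T[1,n,m,\<mu>] = f_{n,m,\<mu>}, T[2,n,m,\<mu>] = f^\<le>_{n,m,\<mu>} and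
  T[3,0,m,\<mu>] = binom(rt_m - 1 + \<mu>, \<mu>). The entries T[0,n,0,0] with n > 0 are never written:
  they are 0 = f^\<le>_{n,0} from the start.\<close>

definition forest_prog :: prog where
  "forest_prog = [LoadConst 1 1,
    Add 11 0 1,
    Mul 12 11 11,
    LoadConst 13 8,
    LoadConst 9 16,
    StoreInd 9 1,
    LoadConst 2 1,
    Sub 10 0 2,
    Add 10 10 1,
    JumpPos 10 11,
    Jump 85,
    Sub 15 2 1,
    Mul 9 15 12,
    Mul 10 15 11,
    Add 9 9 10,
    Mul 9 9 13,
    LoadConst 10 16,
    Add 9 9 10,
    LoadInd 5 9,
    Sub 5 5 1,
    LoadConst 3 0,
    Sub 10 0 3,
    Add 10 10 1,
    JumpPos 10 25,
    Jump 83,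
    LoadConst 7 0,
    LoadConst 6 1,
    LoadConst 4 1,
    Mul 10 4 2,
    Sub 14 3 10,
    Add 10 14 1,
    JumpPos 10 33,
    Jump 65,
    Add 10 5 4,
    Mul 6 6 10,
    Div 6 6 4,
    Mul 9 2 11,
    Add 9 9 4,
    Mul 9 9 13,
    LoadConst 10 19,
    Add 9 9 10,
    StoreInd 9 6,
    Sub 15 2 1,
    Mul 9 14 12,
    Mul 10 15 11,
    Add 9 9 10,
    Mul 9 9 13,
    LoadConst 10 16,
    Add 9 9 10,
    LoadInd 8 9,
    Mul 8 6 8,
    Mul 9 3 12,
    Mul 10 2 11,
    Add 9 9 10,
    Add 9 9 4,
    Mul 9 9 13,
    LoadConst 10 17,
    Add 9 9 10,
    StoreInd 9 8,
    Add 7 7 8,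
    LoadConst 10 1,
    Add 9 9 10,
    StoreInd 9 7,
    Add 4 4 1,
    Jump 28,
    Sub 15 2 1,
    Mul 9 3 12,
    Mul 10 15 11,
    Add 9 9 10,
    Mul 9 9 13,
    LoadConst 10 16,
    Add 9 9 10,
    LoadInd 8 9,
    Add 8 8 7,
    Mul 9 3 12,
    Mul 10 2 11,
    Add 9 9 10,
    Mul 9 9 13,
    LoadConst 10 16,
    Add 9 9 10,
    StoreInd 9 8,
    Add 3 3 1,
    Jump 21,
    Add 2 2 1,
    Jump 7,
    Halt]"


lemma forest_prog_nth:
  "forest_prog ! 0 = LoadConst 1 1"
  "forest_prog ! Suc 0 = Add 11 0 1"
  "forest_prog ! 2 = Mul 12 11 11"
  "forest_prog ! 3 = LoadConst 13 8"
  "forest_prog ! 4 = LoadConst 9 16"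
  "forest_prog ! 5 = StoreInd 9 1"
  "forest_prog ! 6 = LoadConst 2 1"
  "forest_prog ! 7 = Sub 10 0 2"
  "forest_prog ! 8 = Add 10 10 1"
  "forest_prog ! 9 = JumpPos 10 11"
  "forest_prog ! 10 = Jump 85"
  "forest_prog ! 11 = Sub 15 2 1"
  "forest_prog ! 12 = Mul 9 15 12"
  "forest_prog ! 13 = Mul 10 15 11"
  "forest_prog ! 14 = Add 9 9 10"
  "forest_prog ! 15 = Mul 9 9 13"
  "forest_prog ! 16 = LoadConst 10 16"
  "forest_prog ! 17 = Add 9 9 10"
  "forest_prog ! 18 = LoadInd 5 9"
  "forest_prog ! 19 = Sub 5 5 1"
  "forest_prog ! 20 = LoadConst 3 0"
  "forest_prog ! 21 = Sub 10 0 3"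
  "forest_prog ! 22 = Add 10 10 1"
  "forest_prog ! 23 = JumpPos 10 25"
  "forest_prog ! 24 = Jump 83"
  "forest_prog ! 25 = LoadConst 7 0"
  "forest_prog ! 26 = LoadConst 6 1"
  "forest_prog ! 27 = LoadConst 4 1"
  "forest_prog ! 28 = Mul 10 4 2"
  "forest_prog ! 29 = Sub 14 3 10"
  "forest_prog ! 30 = Add 10 14 1"
  "forest_prog ! 31 = JumpPos 10 33"
  "forest_prog ! 32 = Jump 65"
  "forest_prog ! 33 = Add 10 5 4"
  "forest_prog ! 34 = Mul 6 6 10"
  "forest_prog ! 35 = Div 6 6 4"
  "forest_prog ! 36 = Mul 9 2 11"
  "forest_prog ! 37 = Add 9 9 4"
  "forest_prog ! 38 = Mul 9 9 13"
  "forest_prog ! 39 = LoadConst 10 19"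
  "forest_prog ! 40 = Add 9 9 10"
  "forest_prog ! 41 = StoreInd 9 6"
  "forest_prog ! 42 = Sub 15 2 1"
  "forest_prog ! 43 = Mul 9 14 12"
  "forest_prog ! 44 = Mul 10 15 11"
  "forest_prog ! 45 = Add 9 9 10"
  "forest_prog ! 46 = Mul 9 9 13"
  "forest_prog ! 47 = LoadConst 10 16"
  "forest_prog ! 48 = Add 9 9 10"
  "forest_prog ! 49 = LoadInd 8 9"
  "forest_prog ! 50 = Mul 8 6 8"
  "forest_prog ! 51 = Mul 9 3 12"
  "forest_prog ! 52 = Mul 10 2 11"
  "forest_prog ! 53 = Add 9 9 10"
  "forest_prog ! 54 = Add 9 9 4"
  "forest_prog ! 55 = Mul 9 9 13"
  "forest_prog ! 56 = LoadConst 10 17"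
  "forest_prog ! 57 = Add 9 9 10"
  "forest_prog ! 58 = StoreInd 9 8"
  "forest_prog ! 59 = Add 7 7 8"
  "forest_prog ! 60 = LoadConst 10 1"
  "forest_prog ! 61 = Add 9 9 10"
  "forest_prog ! 62 = StoreInd 9 7"
  "forest_prog ! 63 = Add 4 4 1"
  "forest_prog ! 64 = Jump 28"
  "forest_prog ! 65 = Sub 15 2 1"
  "forest_prog ! 66 = Mul 9 3 12"
  "forest_prog ! 67 = Mul 10 15 11"
  "forest_prog ! 68 = Add 9 9 10"
  "forest_prog ! 69 = Mul 9 9 13"
  "forest_prog ! 70 = LoadConst 10 16"
  "forest_prog ! 71 = Add 9 9 10"
  "forest_prog ! 72 = LoadInd 8 9"
  "forest_prog ! 73 = Add 8 8 7"
  "forest_prog ! 74 = Mul 9 3 12"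
  "forest_prog ! 75 = Mul 10 2 11"
  "forest_prog ! 76 = Add 9 9 10"
  "forest_prog ! 77 = Mul 9 9 13"
  "forest_prog ! 78 = LoadConst 10 16"
  "forest_prog ! 79 = Add 9 9 10"
  "forest_prog ! 80 = StoreInd 9 8"
  "forest_prog ! 81 = Add 3 3 1"
  "forest_prog ! 82 = Jump 21"
  "forest_prog ! 83 = Add 2 2 1"
  "forest_prog ! 84 = Jump 7"
  "forest_prog ! 85 = Halt"
  by (simp_all add: forest_prog_def)

lemma length_forest_prog: "length forest_prog = 86"
  by (simp add: forest_prog_def)

definition table_addr :: "nat \<Rightarrow> nat \<times> nat \<times> nat \<times> nat \<Rightarrow> nat" where
  "table_addr K = (\<lambda>(t, a, b, c). 16 + t + 8 * (a * (K * K) + b * K + c))"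

lemma table_addr_ge_16: "table_addr K k \<ge> 16"
  by (auto simp: table_addr_def split: prod.splits)

lemma table_addr_neq_register [simp]:
  "r < 16 \<Longrightarrow> table_addr K k \<noteq> r" "r < 16 \<Longrightarrow> r \<noteq> table_addr K k"
  using table_addr_ge_16[of K k] by auto

lemma table_addr_eq_iff [simp]:
  assumes "t < 8" "t' < 8"
  shows "table_addr K (t, a, b, c) = table_addr K (t', a', b', c') \<longleftrightarrow>
    t = t' \<and> a * (K * K) + b * K + c = a' * (K * K) + b' * K + c'"
proof -
  have "16 + t + 8 * x = 16 + t' + 8 * x' \<longleftrightarrow> t = t' \<and> x = x'" for x x' :: nat
    using assms by presburger
  from this[of "a * (K * K) + b * K + c" "a' * (K * K) + b' * K + c'"] show ?thesis
    by (simp only: table_addr_def prod.case)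
qed

lemmas exec_checked_simps =
  exec_checked_numeral exec_checked_Suc exec_checked_0 step_def accessed_def halted_def
  forest_prog_nth length_forest_prog numeral_2_eq_2[symmetric]

lemma prog_init:
  assumes "\<And>r. r < 16 \<Longrightarrow> r \<in> C" "16 \<in> C"
  shows "\<exists>M'. runs forest_prog C (0, (\<lambda>_. 0)(0 := int N)) 7 (7, M') \<and>
    M' 0 = int N \<and> M' 1 = 1 \<and> M' 11 = int N + 1 \<and> M' 12 = (int N + 1) * (int N + 1) \<and>
    M' 13 = 8 \<and> M' 2 = 1 \<and> M' 16 = 1 \<and> (\<forall>x. x \<notin> {0,1,2,9,11,12,13,16} \<longrightarrow> M' x = 0)"
  by (rule runs_if_exec_checked) (use assms in \<open>simp add: exec_checked_simps\<close>)

lemma prog_outer_test_pass: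
  assumes "0 < M 0 - M 2 + M 1" "\<And>r. r < 16 \<Longrightarrow> r \<in> C"
  shows "\<exists>M'. runs forest_prog C (7, M) 3 (11, M') \<and> (\<forall>x. x \<noteq> 10 \<longrightarrow> M' x = M x)"
  by (rule runs_if_exec_checked) (use assms in \<open>simp add: exec_checked_simps\<close>)

lemma prog_outer_test_exit:
  assumes "\<not> 0 < M 0 - M 2 + M 1" "\<And>r. r < 16 \<Longrightarrow> r \<in> C"
  shows "\<exists>M'. runs forest_prog C (7, M) 4 (85, M') \<and> (\<forall>x. x \<noteq> 10 \<longrightarrow> M' x = M x)"
  by (rule runs_if_exec_checked) (use assms in \<open>simp add: exec_checked_simps\<close>)

lemma prog_outer_entry:
  assumes M: "M 1 = 1" "M 13 = 8" "M 11 = int K" "M 12 = int (K * K)" "M 2 = int m" "m \<ge> 1"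
    and C: "\<And>r. r < 16 \<Longrightarrow> r \<in> C" "table_addr K (0, m - 1, m - 1, 0) \<in> C"
  shows "\<exists>M'. runs forest_prog C (11, M) 10 (21, M') \<and>
    (\<forall>x. x \<notin> {3,5,9,10,15} \<longrightarrow> M' x = M x) \<and>
    M' 5 = M (table_addr K (0, m - 1, m - 1, 0)) - M 1 \<and> M' 3 = 0"
proof -
  have m: "nat (int m - 1) = m - 1"
    by arith
  have "nat (((M 2 - M (Suc 0)) * M 12 + (M 2 - M (Suc 0)) * M 11) * M 13 + 16) =
      table_addr K (0, m - 1, m - 1, 0)"
    using M m by (simp add: table_addr_def nat_add_distrib nat_mult_distrib)
  then show ?thesis
    by (intro runs_if_exec_checked) (use C in \<open>simp add: exec_checked_simps\<close>)
qed

lemma prog_middle_test_pass: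
  assumes "0 < M 0 - M 3 + M 1" "\<And>r. r < 16 \<Longrightarrow> r \<in> C"
  shows "\<exists>M'. runs forest_prog C (21, M) 3 (25, M') \<and> (\<forall>x. x \<noteq> 10 \<longrightarrow> M' x = M x)"
  by (rule runs_if_exec_checked) (use assms in \<open>simp add: exec_checked_simps\<close>)

lemma prog_middle_test_exit:
  assumes "\<not> 0 < M 0 - M 3 + M 1" "\<And>r. r < 16 \<Longrightarrow> r \<in> C"
  shows "\<exists>M'. runs forest_prog C (21, M) 4 (83, M') \<and> (\<forall>x. x \<noteq> 10 \<longrightarrow> M' x = M x)"
  by (rule runs_if_exec_checked) (use assms in \<open>simp add: exec_checked_simps\<close>)

lemma prog_middle_entry:
  assumes "\<And>r. r < 16 \<Longrightarrow> r \<in> C"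
  shows "\<exists>M'. runs forest_prog C (25, M) 3 (28, M') \<and> (\<forall>x. x \<notin> {4,6,7} \<longrightarrow> M' x = M x) \<and>
    M' 4 = 1 \<and> M' 6 = 1 \<and> M' 7 = 0"
  by (rule runs_if_exec_checked) (use assms in \<open>simp add: exec_checked_simps\<close>)

lemma prog_inner_test_pass:
  assumes "0 < M 3 - M 4 * M 2 + M 1" "\<And>r. r < 16 \<Longrightarrow> r \<in> C"
  shows "\<exists>M'. runs forest_prog C (28, M) 4 (33, M') \<and> (\<forall>x. x \<notin> {10,14} \<longrightarrow> M' x = M x) \<and>
    M' 14 = M 3 - M 4 * M 2"
  by (rule runs_if_exec_checked) (use assms in \<open>simp add: exec_checked_simps\<close>)

lemma prog_inner_test_exit:
  assumes "\<not> 0 < M 3 - M 4 * M 2 + M 1" "\<And>r. r < 16 \<Longrightarrow> r \<in> C"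
  shows "\<exists>M'. runs forest_prog C (28, M) 5 (65, M') \<and> (\<forall>x. x \<notin> {10,14} \<longrightarrow> M' x = M x)"
  by (rule runs_if_exec_checked) (use assms in \<open>simp add: exec_checked_simps\<close>)

lemma prog_inner_body:
  assumes M: "M 1 = 1" "M 13 = 8" "M 11 = int K" "M 12 = int (K * K)" "M 2 = int m" "M 3 = int n"
      "M 4 = int \<mu>" "M 14 = int j" "m \<ge> 1"
    and C: "\<And>r. r < 16 \<Longrightarrow> r \<in> C" "table_addr K (3, 0, m, \<mu>) \<in> C"
      "table_addr K (0, j, m - 1, 0) \<in> C" "table_addr K (1, n, m, \<mu>) \<in> C" "table_addr K (2, n, m, \<mu>) \<in> C"
  defines "b \<equiv> M 6 * (M 5 + M 4) div M 4"
  shows "\<exists>M'. runs forest_prog C (33, M) 32 (28, M') \<and>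
    (\<forall>x. x \<notin> {4,6,7,8,9,10,15, table_addr K (3, 0, m, \<mu>), table_addr K (1, n, m, \<mu>),
      table_addr K (2, n, m, \<mu>)} \<longrightarrow> M' x = M x) \<and>
    M' 4 = M 4 + M 1 \<and> M' 6 = b \<and> M' 7 = M 7 + b * M (table_addr K (0, j, m - 1, 0)) \<and>
    M' (table_addr K (3, 0, m, \<mu>)) = b \<and>
    M' (table_addr K (1, n, m, \<mu>)) = b * M (table_addr K (0, j, m - 1, 0)) \<and>
    M' (table_addr K (2, n, m, \<mu>)) = M 7 + b * M (table_addr K (0, j, m - 1, 0))"
proof -
  have m: "nat (int m - 1) = m - 1"
    by arith
  have "nat ((M 2 * M 11 + M 4) * M 13 + 19) = table_addr K (3, 0, m, \<mu>)"
    "nat ((M 14 * M 12 + (M 2 - M (Suc 0)) * M 11) * M 13 + 16) = table_addr K (0, j, m - 1, 0)"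
    "nat ((M 3 * M 12 + M 2 * M 11 + M 4) * M 13 + 17) = table_addr K (1, n, m, \<mu>)"
    "nat (18 + (M 3 * M 12 + M 2 * M 11 + M 4) * M 13) = table_addr K (2, n, m, \<mu>)"
    using M m by (simp_all add: table_addr_def nat_add_distrib nat_mult_distrib)
  then show ?thesis
    unfolding b_def by (intro runs_if_exec_checked) (use C in \<open>simp add: exec_checked_simps\<close>)
qed

lemma prog_middle_exit:
  assumes M: "M 1 = 1" "M 13 = 8" "M 11 = int K" "M 12 = int (K * K)" "M 2 = int m" "M 3 = int n"
      "m \<ge> 1"
    and C: "\<And>r. r < 16 \<Longrightarrow> r \<in> C" "table_addr K (0, n, m - 1, 0) \<in> C" "table_addr K (0, n, m, 0) \<in> C"
  shows "\<exists>M'. runs forest_prog C (65, M) 18 (21, M') \<and>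
    (\<forall>x. x \<notin> {3,8,9,10,15, table_addr K (0, n, m, 0)} \<longrightarrow> M' x = M x) \<and>
    M' (table_addr K (0, n, m, 0)) = M (table_addr K (0, n, m - 1, 0)) + M 7 \<and> M' 3 = M 3 + M 1"
proof -
  have m: "nat (int m - 1) = m - 1"
    by arith
  have "nat ((M 3 * M 12 + (M 2 - M (Suc 0)) * M 11) * M 13 + 16) = table_addr K (0, n, m - 1, 0)"
    "nat ((M 3 * M 12 + M 2 * M 11) * M 13 + 16) = table_addr K (0, n, m, 0)"
    using M m by (simp_all add: table_addr_def nat_add_distrib nat_mult_distrib)
  then show ?thesis
    by (intro runs_if_exec_checked) (use C in \<open>simp add: exec_checked_simps\<close>)
qed

lemma prog_outer_exit:
  assumes "\<And>r. r < 16 \<Longrightarrow> r \<in> C"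
  shows "\<exists>M'. runs forest_prog C (83, M) 2 (7, M') \<and> (\<forall>x. x \<noteq> 2 \<longrightarrow> M' x = M x) \<and> M' 2 = M 2 + M 1"
  by (rule runs_if_exec_checked) (use assms in \<open>simp add: exec_checked_simps\<close>)

definition table_value :: "nat \<times> nat \<times> nat \<times> nat \<Rightarrow> int" where
  "table_value = (\<lambda>(t, a, b, c).
    if t = 0 then int (f_le_m a b) else if t = 1 then int (f_m_mu a b c)
    else if t = 2 then int (f_le_m_mu a b c) else int ((rt b - 1 + c) choose c))"

definition table_keys :: "nat \<Rightarrow> (nat \<times> nat \<times> nat \<times> nat) set" where
  "table_keys N = {(t, a, b, c).
    (t = 0 \<and> a \<le> N \<and> b \<le> N \<and> c = 0) \<or>
    ((t = 1 \<or> t = 2) \<and> 1 \<le> b \<and> 1 \<le> c \<and> c * b \<le> a \<and> a \<le> N) \<or>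
    (t = 3 \<and> a = 0 \<and> 1 \<le> b \<and> 1 \<le> c \<and> c * b \<le> N)}"

text \<open>The keys whose entries are final when the loop counters are m, n and \<mu>.\<close>

definition keys_before :: "nat \<Rightarrow> nat \<Rightarrow> nat \<Rightarrow> nat \<Rightarrow> (nat \<times> nat \<times> nat \<times> nat) set" where
  "keys_before N m n \<mu> = {(t, a, b, c) \<in> table_keys N.
    (t = 0 \<longrightarrow> b < m \<or> (b = m \<and> a < n)) \<and>
    ((t = 1 \<or> t = 2) \<longrightarrow> b < m \<or> (b = m \<and> (a < n \<or> (a = n \<and> c < \<mu>)))) \<and>
    (t = 3 \<longrightarrow> b < m \<or> (b = m \<and> (c * b < n \<or> c < \<mu>)))}"

definition prog_cells :: "nat \<Rightarrow> nat set" where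
  "prog_cells N = {..<16} \<union> table_addr (N + 1) ` table_keys N"

definition table_ok :: "nat \<Rightarrow> (nat \<times> nat \<times> nat \<times> nat) set \<Rightarrow> (nat \<Rightarrow> int) \<Rightarrow> bool" where
  "table_ok N D M \<longleftrightarrow> (\<forall>k\<in>D. M (table_addr (N + 1) k) = table_value k)"

definition registers_ok :: "nat \<Rightarrow> (nat \<Rightarrow> int) \<Rightarrow> bool" where
  "registers_ok N M \<longleftrightarrow>
    M 0 = int N \<and> M 1 = 1 \<and> M 11 = int (N + 1) \<and> M 12 = int ((N + 1) * (N + 1)) \<and> M 13 = 8"

lemma table_keys_bound: "(t, a, b, c) \<in> table_keys N \<Longrightarrow> t < 8 \<and> a \<le> N \<and> b \<le> N \<and> c \<le> N"
proof -
  have "b \<le> x \<and> c \<le> x" if "1 \<le> b" "1 \<le> c" "c * b \<le> x" for x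
  proof -
    have "b \<le> c * b" "c \<le> c * b"
      using that by simp_all
    then show ?thesis
      using that(3) by linarith
  qed
  then show "(t, a, b, c) \<in> table_keys N \<Longrightarrow> ?thesis"
    unfolding table_keys_def by auto
qed

lemma mult_add_eq_mult_add_iff:
  assumes "(b :: nat) < K" "b' < K"
  shows "a * K + b = a' * K + b' \<longleftrightarrow> a = a' \<and> b = b'"
proof
  assume eq: "a * K + b = a' * K + b'"
  have "a = (a * K + b) div K" "a' = (a' * K + b') div K"
    using assms by simp_all
  then show "a = a' \<and> b = b'"
    using eq by simp
qed simp

lemma table_addr_inj_on: "inj_on (table_addr (N + 1)) (table_keys N)"
proof (rule inj_onI)
  fix k k' assume k: "k \<in> table_keys N" "k' \<in> table_keys N"
    and eq: "table_addr (N + 1) k = table_addr (N + 1) k'"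
  obtain t a b c t' a' b' c' where kk: "k = (t, a, b, c)" "k' = (t', a', b', c')"
    by (cases k, cases k') auto
  define K where "K = N + 1"
  have "t < 8 \<and> b \<le> N \<and> c \<le> N" "t' < 8 \<and> b' \<le> N \<and> c' \<le> N"
    using table_keys_bound k unfolding kk by blast+
  then have bounds: "t < 8" "t' < 8" "b < K" "c < K" "b' < K" "c' < K"
    by (simp_all add: K_def)
  have "table_addr K (t, a, b, c) = table_addr K (t', a', b', c')"
    using eq unfolding kk K_def .
  then have "t = t'" "(a * K + b) * K + c = (a' * K + b') * K + c'"
    by (simp_all add: table_addr_eq_iff[OF bounds(1,2)] algebra_simps)
  moreover from this(2) have "a * K + b = a' * K + b'" "c = c'"
    using mult_add_eq_mult_add_iff[OF bounds(4,6)] by blast+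
  moreover from this(1) have "a = a'" "b = b'"
    using mult_add_eq_mult_add_iff[OF bounds(3,5)] by blast+
  ultimately show "k = k'"
    unfolding kk by simp
qed

lemma register_in_prog_cells: "r < 16 \<Longrightarrow> r \<in> prog_cells N"
  by (simp add: prog_cells_def)

lemma table_addr_in_prog_cells: "k \<in> table_keys N \<Longrightarrow> table_addr (N + 1) k \<in> prog_cells N"
  by (simp add: prog_cells_def)

lemma table_ok_frame: "table_ok N D M \<Longrightarrow> \<forall>x\<ge>16. M' x = M x \<Longrightarrow> table_ok N D M'"
  using table_addr_ge_16 by (auto simp: table_ok_def)

lemma table_ok_update:
  assumes "table_ok N D M" "D \<subseteq> table_keys N" "E \<subseteq> table_keys N"
    and "\<forall>x\<ge>16. x \<notin> table_addr (N + 1) ` E \<longrightarrow> M' x = M x"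
    and "\<forall>k\<in>E. M' (table_addr (N + 1) k) = table_value k"
  shows "table_ok N (D \<union> E) M'"
  unfolding table_ok_def
proof
  fix k assume k: "k \<in> D \<union> E"
  show "M' (table_addr (N + 1) k) = table_value k"
  proof (cases "k \<in> E")
    case False
    then have "table_addr (N + 1) k \<notin> table_addr (N + 1) ` E"
      using k assms(2,3) inj_on_image_mem_iff[OF table_addr_inj_on] by blast
    then show ?thesis
      using assms(1,4) table_addr_ge_16 k False by (auto simp: table_ok_def)
  qed (use assms(5) in blast)
qed

lemma keys_before_subset: "keys_before N m n \<mu> \<subseteq> table_keys N"
  by (auto simp: keys_before_def)

lemma keys_before_Suc_mu:
  assumes "\<mu> * m \<le> n" "1 \<le> \<mu>" "1 \<le> m" "n \<le> N"
  shows "keys_before N m n (Suc \<mu>) = keys_before N m n \<mu> \<union> {(3, 0, m, \<mu>), (1, n, m, \<mu>), (2, n, m, \<mu>)}"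
proof (intro set_eqI)
  fix k :: "nat \<times> nat \<times> nat \<times> nat"
  obtain t a b c where k: "k = (t, a, b, c)"
    by (cases k) auto
  show "k \<in> keys_before N m n (Suc \<mu>) \<longleftrightarrow> k \<in> keys_before N m n \<mu> \<union> {(3, 0, m, \<mu>), (1, n, m, \<mu>), (2, n, m, \<mu>)}"
    unfolding k keys_before_def table_keys_def using assms
    by (cases "b = m"; cases "c = \<mu>"; simp add: less_Suc_eq; arith)
qed

lemma keys_before_Suc_n:
  assumes "1 \<le> m" "m \<le> N" "n \<le> N"
  shows "keys_before N m (Suc n) 1 = keys_before N m n (n div m + 1) \<union> {(0, n, m, 0)}"
proof (intro set_eqI)
  fix k :: "nat \<times> nat \<times> nat \<times> nat"
  obtain t a b c where k: "k = (t, a, b, c)"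
    by (cases k) auto
  have div: "c < n div m + 1 \<longleftrightarrow> c * m \<le> n" for c
    using assms(1) by (simp add: less_Suc_eq_le less_eq_div_iff_mult_less_eq)
  show "k \<in> keys_before N m (Suc n) 1 \<longleftrightarrow> k \<in> keys_before N m n (n div m + 1) \<union> {(0, n, m, 0)}"
    unfolding k keys_before_def table_keys_def div using assms
    by (cases "b = m"; cases "a = n"; simp add: less_Suc_eq; arith)
qed

lemma keys_before_Suc_m:
  assumes "1 \<le> m" "m \<le> N"
  shows "keys_before N (Suc m) 0 1 = keys_before N m (N + 1) 1"
proof (intro set_eqI)
  fix k :: "nat \<times> nat \<times> nat \<times> nat"
  obtain t a b c where k: "k = (t, a, b, c)"
    by (cases k) auto
  show "k \<in> keys_before N (Suc m) 0 1 \<longleftrightarrow> k \<in> keys_before N m (N + 1) 1"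
    unfolding k keys_before_def table_keys_def using assms
    by (cases "b = m"; simp add: less_Suc_eq; arith)
qed

lemma keys_before_end: "keys_before N (N + 1) 0 1 = table_keys N"
proof (intro set_eqI iffI)
  fix k assume "k \<in> table_keys N"
  moreover obtain t a b c where "k = (t, a, b, c)"
    by (cases k) auto
  ultimately show "k \<in> keys_before N (N + 1) 0 1"
    using table_keys_bound[of t a b c N] by (simp add: keys_before_def)
qed (auto simp: keys_before_def)

definition inner_inv :: "nat \<Rightarrow> nat \<Rightarrow> nat \<Rightarrow> nat \<Rightarrow> (nat \<Rightarrow> int) \<Rightarrow> bool" where
  "inner_inv N m n \<mu> M \<longleftrightarrow> registers_ok N M \<and>
    M 2 = int m \<and> M 3 = int n \<and> M 4 = int \<mu> \<and> M 5 = int (rt m - 1) \<and>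
    M 6 = int ((rt m - 1 + (\<mu> - 1)) choose (\<mu> - 1)) \<and> M 7 = int (\<Sum>j=1..\<mu> - 1. f_m_mu n m j) \<and>
    table_ok N (keys_before N m n \<mu>) M \<and> 1 \<le> m \<and> m \<le> N \<and> n \<le> N \<and> 1 \<le> \<mu> \<and> (\<mu> - 1) * m \<le> n"

definition middle_inv :: "nat \<Rightarrow> nat \<Rightarrow> nat \<Rightarrow> (nat \<Rightarrow> int) \<Rightarrow> bool" where
  "middle_inv N m n M \<longleftrightarrow> registers_ok N M \<and>
    M 2 = int m \<and> M 3 = int n \<and> M 5 = int (rt m - 1) \<and> table_ok N (keys_before N m n 1) M \<and>
    1 \<le> m \<and> m \<le> N \<and> n \<le> N + 1"

definition outer_inv :: "nat \<Rightarrow> nat \<Rightarrow> (nat \<Rightarrow> int) \<Rightarrow> bool" where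
  "outer_inv N m M \<longleftrightarrow> registers_ok N M \<and>
    M 2 = int m \<and> table_ok N (keys_before N m 0 1) M \<and> 1 \<le> m \<and> m \<le> N + 1"

lemma inner_iteration:
  assumes I: "inner_inv N m n \<mu> M" and le: "\<mu> * m \<le> n"
  defines "b \<equiv> M 6 * (M 5 + M 4) div M 4"
    and "x \<equiv> M 6 * (M 5 + M 4) div M 4 * M (table_addr (N + 1) (0, n - \<mu> * m, m - 1, 0))"
  shows "\<exists>M'. runs forest_prog (prog_cells N) (28, M) 36 (28, M') \<and>
    (\<forall>y. y \<notin> {4,6,7,8,9,10,14,15, table_addr (N + 1) (3, 0, m, \<mu>), table_addr (N + 1) (1, n, m, \<mu>),
      table_addr (N + 1) (2, n, m, \<mu>)} \<longrightarrow> M' y = M y) \<and>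
    M' 4 = M 4 + 1 \<and> M' 6 = b \<and> M' 7 = M 7 + x \<and> M' (table_addr (N + 1) (3, 0, m, \<mu>)) = b \<and>
    M' (table_addr (N + 1) (1, n, m, \<mu>)) = x \<and> M' (table_addr (N + 1) (2, n, m, \<mu>)) = M 7 + x"
proof -
  note I' = I[unfolded inner_inv_def registers_ok_def]
  have "int (\<mu> * m) \<le> int n"
    using le by (simp only: of_nat_le_iff)
  then have "0 < M 3 - M 4 * M 2 + M 1"
    using I' by simp
  then obtain M\<^sub>1 where run\<^sub>1: "runs forest_prog (prog_cells N) (28, M) 4 (33, M\<^sub>1)"
    and frame\<^sub>1: "\<forall>y. y \<notin> {10,14} \<longrightarrow> M\<^sub>1 y = M y" and M\<^sub>1_14: "M\<^sub>1 14 = M 3 - M 4 * M 2"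
    using prog_inner_test_pass register_in_prog_cells by blast
  have M\<^sub>1_eq: "M\<^sub>1 y = M y" if "y \<noteq> 10" "y \<noteq> 14" for y
    using frame\<^sub>1 that by simp
  have keys: "(3, 0, m, \<mu>) \<in> table_keys N" "(0, n - \<mu> * m, m - 1, 0) \<in> table_keys N"
      "(1, n, m, \<mu>) \<in> table_keys N" "(2, n, m, \<mu>) \<in> table_keys N"
    using I' le by (auto simp: table_keys_def)
  have M\<^sub>1: "M\<^sub>1 1 = 1" "M\<^sub>1 13 = 8" "M\<^sub>1 11 = int (N + 1)" "M\<^sub>1 12 = int ((N + 1) * (N + 1))"
      "M\<^sub>1 2 = int m" "M\<^sub>1 3 = int n" "M\<^sub>1 4 = int \<mu>" "M\<^sub>1 14 = int (n - \<mu> * m)"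
    using M\<^sub>1_eq M\<^sub>1_14 I' le by (simp_all add: of_nat_diff)
  obtain M\<^sub>2 where run\<^sub>2: "runs forest_prog (prog_cells N) (33, M\<^sub>1) 32 (28, M\<^sub>2)"
    and M\<^sub>2: "(\<forall>y. y \<notin> {4,6,7,8,9,10,15, table_addr (N + 1) (3, 0, m, \<mu>), table_addr (N + 1) (1, n, m, \<mu>),
        table_addr (N + 1) (2, n, m, \<mu>)} \<longrightarrow> M\<^sub>2 y = M\<^sub>1 y) \<and>
      M\<^sub>2 4 = M\<^sub>1 4 + M\<^sub>1 1 \<and> M\<^sub>2 6 = M\<^sub>1 6 * (M\<^sub>1 5 + M\<^sub>1 4) div M\<^sub>1 4 \<and>
      M\<^sub>2 7 = M\<^sub>1 7 + M\<^sub>1 6 * (M\<^sub>1 5 + M\<^sub>1 4) div M\<^sub>1 4 * M\<^sub>1 (table_addr (N + 1) (0, n - \<mu> * m, m - 1, 0)) \<and>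
      M\<^sub>2 (table_addr (N + 1) (3, 0, m, \<mu>)) = M\<^sub>1 6 * (M\<^sub>1 5 + M\<^sub>1 4) div M\<^sub>1 4 \<and>
      M\<^sub>2 (table_addr (N + 1) (1, n, m, \<mu>)) =
        M\<^sub>1 6 * (M\<^sub>1 5 + M\<^sub>1 4) div M\<^sub>1 4 * M\<^sub>1 (table_addr (N + 1) (0, n - \<mu> * m, m - 1, 0)) \<and>
      M\<^sub>2 (table_addr (N + 1) (2, n, m, \<mu>)) =
        M\<^sub>1 7 + M\<^sub>1 6 * (M\<^sub>1 5 + M\<^sub>1 4) div M\<^sub>1 4 * M\<^sub>1 (table_addr (N + 1) (0, n - \<mu> * m, m - 1, 0))"
    using prog_inner_body[OF M\<^sub>1 _ register_in_prog_cells table_addr_in_prog_cells[OF keys(1)]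
      table_addr_in_prog_cells[OF keys(2)] table_addr_in_prog_cells[OF keys(3)]
      table_addr_in_prog_cells[OF keys(4)]] I' by blast
  have "\<forall>y. y \<notin> {4,6,7,8,9,10,14,15, table_addr (N + 1) (3, 0, m, \<mu>), table_addr (N + 1) (1, n, m, \<mu>),
      table_addr (N + 1) (2, n, m, \<mu>)} \<longrightarrow> M\<^sub>2 y = M y"
    using M\<^sub>2 frame\<^sub>1 by auto
  then show ?thesis
    unfolding b_def x_def using runs_trans[OF run\<^sub>1 run\<^sub>2] M\<^sub>2 M\<^sub>1(1)
    by (intro exI[of _ M\<^sub>2]) (simp add: M\<^sub>1_eq)
qed

lemma inner_step:
  assumes I: "inner_inv N m n \<mu> M" and le: "\<mu> * m \<le> n"
  shows "\<exists>M'. runs forest_prog (prog_cells N) (28, M) 36 (28, M') \<and> inner_inv N m n (Suc \<mu>) M'"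
proof -
  note I' = I[unfolded inner_inv_def registers_ok_def]
  define b where "b = (rt m - 1 + \<mu>) choose \<mu>"
  define j where "j = n - \<mu> * m"
  have "(0, j, m - 1, 0) \<in> keys_before N m n \<mu>"
    using I' by (auto simp: keys_before_def table_keys_def j_def)
  then have M_j: "M (table_addr (N + 1) (0, n - \<mu> * m, m - 1, 0)) = int (f_le_m j (m - 1))"
    using I' by (auto simp: table_ok_def table_value_def j_def)
  have M_b: "M 6 * (M 5 + M 4) div M 4 = int b"
    using I' choose_eq_div[of \<mu> "rt m - 1"] by (simp add: b_def)
  have f_m_mu: "f_m_mu n m \<mu> = b * f_le_m j (m - 1)"
    using f_m_mu_eq[of m \<mu> n] I' le by (simp add: b_def j_def)
  have sum: "(\<Sum>i=1..\<mu>. f_m_mu n m i) = (\<Sum>i=1..\<mu> - 1. f_m_mu n m i) + f_m_mu n m \<mu>"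
    using I' by (cases \<mu>) auto
  obtain M' where run: "runs forest_prog (prog_cells N) (28, M) 36 (28, M')"
    and M': "\<forall>y. y \<notin> {4,6,7,8,9,10,14,15, table_addr (N + 1) (3, 0, m, \<mu>), table_addr (N + 1) (1, n, m, \<mu>),
        table_addr (N + 1) (2, n, m, \<mu>)} \<longrightarrow> M' y = M y"
      "M' 4 = M 4 + 1" "M' 6 = int b" "M' 7 = M 7 + int b * int (f_le_m j (m - 1))"
      "M' (table_addr (N + 1) (3, 0, m, \<mu>)) = int b"
      "M' (table_addr (N + 1) (1, n, m, \<mu>)) = int b * int (f_le_m j (m - 1))"
      "M' (table_addr (N + 1) (2, n, m, \<mu>)) = M 7 + int b * int (f_le_m j (m - 1))"
    using inner_iteration[OF I le, unfolded M_b M_j] by blast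
  define E where "E = {(3 :: nat, 0 :: nat, m, \<mu>), (1, n, m, \<mu>), (2, n, m, \<mu>)}"
  have "table_ok N (keys_before N m n \<mu> \<union> E) M'"
  proof (rule table_ok_update[where M = M])
    show "E \<subseteq> table_keys N"
      using I' le by (auto simp: E_def table_keys_def)
    show "\<forall>x\<ge>16. x \<notin> table_addr (N + 1) ` E \<longrightarrow> M' x = M x"
      using M'(1) by (auto simp: E_def)
    show "\<forall>k\<in>E. M' (table_addr (N + 1) k) = table_value k"
      using M'(5-7) I' sum f_m_mu f_le_m_mu_eq_sum[of m n \<mu>] by (simp add: E_def table_value_def b_def)
  qed (use I' keys_before_subset in auto)
  then have "table_ok N (keys_before N m n (Suc \<mu>)) M'"
    using keys_before_Suc_mu[of \<mu> m n N] I' le by (simp add: E_def)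
  then have "inner_inv N m n (Suc \<mu>) M'"
    using M' I' le sum f_m_mu unfolding inner_inv_def registers_ok_def by (simp add: b_def)
  then show ?thesis
    using run by blast
qed

lemma inner_loop:
  "inner_inv N m n \<mu> M \<Longrightarrow> \<exists>M'. runs forest_prog (prog_cells N) (28, M) (36 * (n div m + 1 - \<mu>) + 5) (65, M') \<and>
    inner_inv N m n (n div m + 1) M'"
proof (induction "n div m + 1 - \<mu>" arbitrary: \<mu> M)
  case 0
  note I = 0(2)[unfolded inner_inv_def registers_ok_def]
  have "\<mu> - 1 \<le> n div m" and lt: "n div m < \<mu>"
    using 0(1) I by (simp_all add: less_eq_div_iff_mult_less_eq)
  then have \<mu>: "\<mu> = n div m + 1"
    by simp
  have "n < \<mu> * m"
    using lt I by (simp add: div_less_iff_less_mult)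
  then have "int n < int (\<mu> * m)"
    by (simp only: of_nat_less_iff)
  then have "\<not> 0 < M 3 - M 4 * M 2 + M 1"
    using I by simp
  then obtain M' where run: "runs forest_prog (prog_cells N) (28, M) 5 (65, M')"
    and frame: "\<forall>x. x \<notin> {10,14} \<longrightarrow> M' x = M x"
    using prog_inner_test_exit register_in_prog_cells by blast
  have "table_ok N (keys_before N m n \<mu>) M'"
    using table_ok_frame[of N _ M M'] I frame by auto
  then have "inner_inv N m n (n div m + 1) M'"
    using I frame \<mu> by (auto simp: inner_inv_def registers_ok_def)
  then show ?case
    using run 0(1) by (metis add_0 mult_0_right)
next
  case (Suc d)
  have "\<mu> \<le> n div m"
    using Suc(2) by simp
  then have "\<mu> * m \<le> n"
    using Suc(3) by (simp add: inner_inv_def less_eq_div_iff_mult_less_eq)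
  then obtain M\<^sub>1 where run\<^sub>1: "runs forest_prog (prog_cells N) (28, M) 36 (28, M\<^sub>1)"
    and inv: "inner_inv N m n (Suc \<mu>) M\<^sub>1"
    using inner_step[OF Suc(3)] by blast
  have "d = n div m + 1 - Suc \<mu>"
    using Suc(2) by simp
  then obtain M' where run\<^sub>2: "runs forest_prog (prog_cells N) (28, M\<^sub>1) (36 * d + 5) (65, M')"
    and "inner_inv N m n (n div m + 1) M'"
    using Suc(1) inv by blast
  moreover have "36 + (36 * d + 5) = 36 * (n div m + 1 - \<mu>) + 5"
    using Suc(2)[symmetric] by simp
  ultimately show ?case
    using runs_trans[OF run\<^sub>1 run\<^sub>2] by metis
qed

lemma middle_entry:
  assumes I: "middle_inv N m n M" and le: "n \<le> N"
  shows "\<exists>M'. runs forest_prog (prog_cells N) (21, M) 6 (28, M') \<and> inner_inv N m n 1 M'"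
proof -
  note I' = I[unfolded middle_inv_def registers_ok_def]
  have "0 < M 0 - M 3 + M 1"
    using I' le by simp
  then obtain M\<^sub>1 where run\<^sub>1: "runs forest_prog (prog_cells N) (21, M) 3 (25, M\<^sub>1)"
    and frame\<^sub>1: "\<forall>x. x \<noteq> 10 \<longrightarrow> M\<^sub>1 x = M x"
    using prog_middle_test_pass register_in_prog_cells by blast
  obtain M\<^sub>2 where run\<^sub>2: "runs forest_prog (prog_cells N) (25, M\<^sub>1) 3 (28, M\<^sub>2)"
    and frame\<^sub>2: "\<forall>x. x \<notin> {4,6,7} \<longrightarrow> M\<^sub>2 x = M\<^sub>1 x" and M\<^sub>2: "M\<^sub>2 4 = 1" "M\<^sub>2 6 = 1" "M\<^sub>2 7 = 0"
    using prog_middle_entry register_in_prog_cells by blast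
  have "table_ok N (keys_before N m n 1) M\<^sub>2"
    using table_ok_frame[of N _ M M\<^sub>2] I' frame\<^sub>1 frame\<^sub>2 by auto
  then have "inner_inv N m n 1 M\<^sub>2"
    using I' le frame\<^sub>1 frame\<^sub>2 M\<^sub>2 by (simp add: inner_inv_def registers_ok_def)
  then show ?thesis
    using runs_trans[OF run\<^sub>1 run\<^sub>2] by auto
qed

lemma middle_exit:
  assumes I: "inner_inv N m n (n div m + 1) M"
  shows "\<exists>M'. runs forest_prog (prog_cells N) (65, M) 18 (21, M') \<and> middle_inv N m (Suc n) M'"
proof -
  note I' = I[unfolded inner_inv_def registers_ok_def]
  have keys: "(0, n, m - 1, 0) \<in> table_keys N" "(0, n, m, 0) \<in> table_keys N"
    using I' by (auto simp: table_keys_def)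
  obtain M' where run: "runs forest_prog (prog_cells N) (65, M) 18 (21, M')"
    and frame: "\<forall>x. x \<notin> {3,8,9,10,15, table_addr (N + 1) (0, n, m, 0)} \<longrightarrow> M' x = M x"
    and M'_new: "M' (table_addr (N + 1) (0, n, m, 0)) = M (table_addr (N + 1) (0, n, m - 1, 0)) + M 7"
    and M'_3: "M' 3 = M 3 + M 1"
    using prog_middle_exit[of M "N + 1" m n, OF _ _ _ _ _ _ _ register_in_prog_cells
      table_addr_in_prog_cells[OF keys(1)] table_addr_in_prog_cells[OF keys(2)]] I' by blast
  have "(0, n, m - 1, 0) \<in> keys_before N m n (n div m + 1)"
    using keys I' by (auto simp: keys_before_def)
  then have "M (table_addr (N + 1) (0, n, m - 1, 0)) = int (f_le_m n (m - 1))"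
    using I' by (auto simp: table_ok_def table_value_def)
  moreover have "f_le_m n m = f_le_m n (m - 1) + (\<Sum>j=1..n div m. f_m_mu n m j)"
    using f_le_m_eq_pred[of m n] f_le_m_mu_eq_sum[of m n] I' by simp
  ultimately have "M' (table_addr (N + 1) (0, n, m, 0)) = table_value (0, n, m, 0)"
    using M'_new I' by (simp add: table_value_def)
  then have "table_ok N (keys_before N m n (n div m + 1) \<union> {(0, n, m, 0)}) M'"
    using table_ok_update[of N _ M "{(0, n, m, 0)}" M'] I' keys keys_before_subset frame by auto
  then have "table_ok N (keys_before N m (Suc n) 1) M'"
    using keys_before_Suc_n[of m N n] I' by simp
  then have "middle_inv N m (Suc n) M'"
    using I' frame M'_3 by (simp add: middle_inv_def registers_ok_def)
  then show ?thesis
    using run by blast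
qed

lemma middle_step:
  assumes I: "middle_inv N m n M" and le: "n \<le> N"
  shows "\<exists>M'. runs forest_prog (prog_cells N) (21, M) (29 + 36 * (n div m)) (21, M') \<and> middle_inv N m (Suc n) M'"
proof -
  obtain M\<^sub>1 where run\<^sub>1: "runs forest_prog (prog_cells N) (21, M) 6 (28, M\<^sub>1)" and "inner_inv N m n 1 M\<^sub>1"
    using middle_entry[OF I le] by blast
  then obtain M\<^sub>2 where run\<^sub>2: "runs forest_prog (prog_cells N) (28, M\<^sub>1) (36 * (n div m) + 5) (65, M\<^sub>2)"
    and "inner_inv N m n (n div m + 1) M\<^sub>2"
    using inner_loop by fastforce
  then obtain M\<^sub>3 where run\<^sub>3: "runs forest_prog (prog_cells N) (65, M\<^sub>2) 18 (21, M\<^sub>3)"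
    and "middle_inv N m (Suc n) M\<^sub>3"
    using middle_exit by blast
  moreover have "6 + (36 * (n div m) + 5) + 18 = 29 + 36 * (n div m)"
    by simp
  ultimately show ?thesis
    using runs_trans[OF runs_trans[OF run\<^sub>1 run\<^sub>2] run\<^sub>3] by metis
qed

lemma middle_loop:
  "middle_inv N m n M \<Longrightarrow>
    \<exists>M'. runs forest_prog (prog_cells N) (21, M) ((N + 1 - n) * (29 + 36 * (N div m)) + 4) (83, M') \<and>
      middle_inv N m (N + 1) M'"
proof (induction "N + 1 - n" arbitrary: n M)
  case 0
  note I = 0(2)[unfolded middle_inv_def registers_ok_def]
  have n: "n = N + 1"
    using 0 I by simp
  then have "\<not> 0 < M 0 - M 3 + M 1"
    using I by simp
  then obtain M' where run: "runs forest_prog (prog_cells N) (21, M) 4 (83, M')"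
    and frame: "\<forall>x. x \<noteq> 10 \<longrightarrow> M' x = M x"
    using prog_middle_test_exit register_in_prog_cells by blast
  have "table_ok N (keys_before N m n 1) M'"
    using table_ok_frame[of N _ M M'] I frame by auto
  then have "middle_inv N m (N + 1) M'"
    using I frame n by (simp add: middle_inv_def registers_ok_def)
  then show ?case
    using run 0(1) by (metis add_0 mult_zero_left)
next
  case (Suc d)
  have le: "n \<le> N"
    using Suc(2) by simp
  obtain M\<^sub>1 where run\<^sub>1: "runs forest_prog (prog_cells N) (21, M) (29 + 36 * (n div m)) (21, M\<^sub>1)"
    and inv: "middle_inv N m (Suc n) M\<^sub>1"
    using middle_step[OF Suc(3) le] by blast
  have "d = N + 1 - Suc n"
    using Suc(2) by simp
  then obtain M' where run\<^sub>2: "runs forest_prog (prog_cells N) (21, M\<^sub>1) (d * (29 + 36 * (N div m)) + 4) (83, M')"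
    and "middle_inv N m (N + 1) M'"
    using Suc(1) inv by blast
  moreover have "29 + 36 * (n div m) + (d * (29 + 36 * (N div m)) + 4) \<le> (N + 1 - n) * (29 + 36 * (N div m)) + 4"
    using div_le_mono[OF le, of m] Suc(2)[symmetric] by simp
  ultimately show ?case
    using runs_mono[OF runs_trans[OF run\<^sub>1 run\<^sub>2]] by blast
qed

lemma outer_entry:
  assumes I: "outer_inv N m M" and le: "m \<le> N"
  shows "\<exists>M'. runs forest_prog (prog_cells N) (7, M) 13 (21, M') \<and> middle_inv N m 0 M'"
proof -
  note I' = I[unfolded outer_inv_def registers_ok_def]
  have "0 < M 0 - M 2 + M 1"
    using I' le by simp
  then obtain M\<^sub>1 where run\<^sub>1: "runs forest_prog (prog_cells N) (7, M) 3 (11, M\<^sub>1)"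
    and frame\<^sub>1: "\<forall>x. x \<noteq> 10 \<longrightarrow> M\<^sub>1 x = M x"
    using prog_outer_test_pass register_in_prog_cells by blast
  have key: "(0, m - 1, m - 1, 0) \<in> keys_before N m 0 1"
    using I' le by (auto simp: keys_before_def table_keys_def)
  obtain M\<^sub>2 where run\<^sub>2: "runs forest_prog (prog_cells N) (11, M\<^sub>1) 10 (21, M\<^sub>2)"
    and frame\<^sub>2: "\<forall>x. x \<notin> {3,5,9,10,15} \<longrightarrow> M\<^sub>2 x = M\<^sub>1 x"
    and M\<^sub>2_5: "M\<^sub>2 5 = M\<^sub>1 (table_addr (N + 1) (0, m - 1, m - 1, 0)) - M\<^sub>1 1" and M\<^sub>2_3: "M\<^sub>2 3 = 0"
  proof -
    have "M\<^sub>1 1 = 1" "M\<^sub>1 13 = 8" "M\<^sub>1 11 = int (N + 1)" "M\<^sub>1 12 = int ((N + 1) * (N + 1))" "M\<^sub>1 2 = int m"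
      using I' frame\<^sub>1 by simp_all
    then show ?thesis
      using prog_outer_entry[of M\<^sub>1 "N + 1" m, OF _ _ _ _ _ _ register_in_prog_cells
        table_addr_in_prog_cells[OF subsetD[OF keys_before_subset key]]] I' that by blast
  qed
  have "M (table_addr (N + 1) (0, m - 1, m - 1, 0)) = int (f_le_m (m - 1) (m - 1))"
    using key I' by (auto simp: table_ok_def table_value_def)
  moreover have "f_le_m (m - 1) (m - 1) = rt m"
    using rt_Suc[of "m - 1"] f_eq_f_le_m[of "m - 1"] I' by simp
  ultimately have "M\<^sub>2 5 = int (rt m - 1)"
    using M\<^sub>2_5 frame\<^sub>1 I' rt_ge_1[of m] by (simp add: of_nat_diff)
  moreover have "table_ok N (keys_before N m 0 1) M\<^sub>2"
    using table_ok_frame[of N _ M M\<^sub>2] I' frame\<^sub>1 frame\<^sub>2 by auto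
  ultimately have "middle_inv N m 0 M\<^sub>2"
    using I' le frame\<^sub>1 frame\<^sub>2 M\<^sub>2_3 by (simp add: middle_inv_def registers_ok_def)
  then show ?thesis
    using runs_trans[OF run\<^sub>1 run\<^sub>2] by auto
qed

lemma outer_exit:
  assumes I: "middle_inv N m (N + 1) M"
  shows "\<exists>M'. runs forest_prog (prog_cells N) (83, M) 2 (7, M') \<and> outer_inv N (Suc m) M'"
proof -
  note I' = I[unfolded middle_inv_def registers_ok_def]
  obtain M' where run: "runs forest_prog (prog_cells N) (83, M) 2 (7, M')"
    and frame: "\<forall>x. x \<noteq> 2 \<longrightarrow> M' x = M x" and M'_2: "M' 2 = M 2 + M 1"
    using prog_outer_exit register_in_prog_cells by blast
  have "table_ok N (keys_before N (Suc m) 0 1) M'"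
    using table_ok_frame[of N _ M M'] keys_before_Suc_m[of m N] I' frame by auto
  then have "outer_inv N (Suc m) M'"
    using I' frame M'_2 by (simp add: outer_inv_def registers_ok_def)
  then show ?thesis
    using run by blast
qed

lemma outer_step:
  assumes I: "outer_inv N m M" and le: "m \<le> N"
  shows "\<exists>M'. runs forest_prog (prog_cells N) (7, M) (19 + (N + 1) * (29 + 36 * (N div m))) (7, M') \<and>
    outer_inv N (Suc m) M'"
proof -
  obtain M\<^sub>1 where run\<^sub>1: "runs forest_prog (prog_cells N) (7, M) 13 (21, M\<^sub>1)" and "middle_inv N m 0 M\<^sub>1"
    using outer_entry[OF I le] by blast
  then obtain M\<^sub>2 where run\<^sub>2: "runs forest_prog (prog_cells N) (21, M\<^sub>1) ((N + 1) * (29 + 36 * (N div m)) + 4) (83, M\<^sub>2)"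
    and "middle_inv N m (N + 1) M\<^sub>2"
    using middle_loop by fastforce
  then obtain M\<^sub>3 where run\<^sub>3: "runs forest_prog (prog_cells N) (83, M\<^sub>2) 2 (7, M\<^sub>3)"
    and "outer_inv N (Suc m) M\<^sub>3"
    using outer_exit by blast
  moreover have "13 + ((N + 1) * (29 + 36 * (N div m)) + 4) + 2 = 19 + (N + 1) * (29 + 36 * (N div m))"
    by simp
  ultimately show ?thesis
    using runs_trans[OF runs_trans[OF run\<^sub>1 run\<^sub>2] run\<^sub>3] by metis
qed

lemma outer_loop:
  "outer_inv N m M \<Longrightarrow>
    \<exists>M'. runs forest_prog (prog_cells N) (7, M) ((\<Sum>i=m..N. 19 + (N + 1) * (29 + 36 * (N div i))) + 4) (85, M') \<and>
      table_ok N (table_keys N) M'"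
proof (induction "N + 1 - m" arbitrary: m M)
  case 0
  note I = 0(2)[unfolded outer_inv_def registers_ok_def]
  have m: "m = N + 1"
    using 0 I by simp
  then have "\<not> 0 < M 0 - M 2 + M 1"
    using I by simp
  then obtain M' where run: "runs forest_prog (prog_cells N) (7, M) 4 (85, M')"
    and frame: "\<forall>x. x \<noteq> 10 \<longrightarrow> M' x = M x"
    using prog_outer_test_exit register_in_prog_cells by blast
  have "table_ok N (table_keys N) M'"
    using table_ok_frame[of N _ M M'] I frame keys_before_end m by auto
  then show ?case
    using run m by auto
next
  case (Suc d)
  have le: "m \<le> N"
    using Suc(2) by simp
  obtain M\<^sub>1 where run\<^sub>1: "runs forest_prog (prog_cells N) (7, M) (19 + (N + 1) * (29 + 36 * (N div m))) (7, M\<^sub>1)"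
    and inv: "outer_inv N (Suc m) M\<^sub>1"
    using outer_step[OF Suc(3) le] by blast
  have "d = N + 1 - Suc m"
    using Suc(2) by simp
  then obtain M' where run\<^sub>2: "runs forest_prog (prog_cells N) (7, M\<^sub>1)
      ((\<Sum>i=Suc m..N. 19 + (N + 1) * (29 + 36 * (N div i))) + 4) (85, M')"
    and "table_ok N (table_keys N) M'"
    using Suc(1) inv by blast
  moreover have "(\<Sum>i=m..N. 19 + (N + 1) * (29 + 36 * (N div i))) =
      19 + (N + 1) * (29 + 36 * (N div m)) + (\<Sum>i=Suc m..N. 19 + (N + 1) * (29 + 36 * (N div i)))"
    using le by (rule sum.atLeast_Suc_atMost)
  ultimately show ?case
    using runs_trans[OF run\<^sub>1 run\<^sub>2] by (intro exI[of _ M']) (simp add: add.assoc)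
qed

lemma prog_start: "\<exists>M. runs forest_prog (prog_cells N) (init N) 7 (7, M) \<and> outer_inv N 1 M"
proof -
  have "16 \<in> prog_cells N"
    using table_addr_in_prog_cells[of "(0, 0, 0, 0)" N] by (simp add: table_keys_def table_addr_def)
  then obtain M where run: "runs forest_prog (prog_cells N) (0, (\<lambda>_. 0)(0 := int N)) 7 (7, M)"
    and M: "M 0 = int N" "M 1 = 1" "M 11 = int N + 1" "M 12 = (int N + 1) * (int N + 1)"
      "M 13 = 8" "M 2 = 1" "M 16 = 1"
    and zero: "\<forall>x. x \<notin> {0,1,2,9,11,12,13,16} \<longrightarrow> M x = 0"
    using prog_init[of "prog_cells N" N] register_in_prog_cells by blast
  have "M (table_addr (N + 1) (0, a, 0, 0)) = int (f_le_m a 0)" for a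
  proof (cases "a = 0")
    case False
    then have "table_addr (N + 1) (0, a, 0, 0) > 16"
      by (simp add: table_addr_def)
    then show ?thesis
      using zero False by (simp add: f_le_m_0)
  qed (use M in \<open>simp add: table_addr_def f_le_m_0\<close>)
  then have "table_ok N (keys_before N 1 0 1) M"
    by (auto simp: table_ok_def keys_before_def table_keys_def table_value_def)
  then have "outer_inv N 1 M"
    using M by (simp add: outer_inv_def registers_ok_def algebra_simps)
  then show ?thesis
    using run by (auto simp: init_def)
qed

definition prog_time :: "nat \<Rightarrow> nat" where
  "prog_time N = 11 + (\<Sum>m=1..N. 19 + (N + 1) * (29 + 36 * (N div m)))"

lemma forest_prog_final:
  "\<exists>M. exec forest_prog (prog_time N) (init N) = (85, M) \<and>
    accessed_upto forest_prog (prog_time N) (init N) \<subseteq> prog_cells N \<and> table_ok N (table_keys N) M"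
proof -
  obtain M\<^sub>1 where run\<^sub>1: "runs forest_prog (prog_cells N) (init N) 7 (7, M\<^sub>1)" and "outer_inv N 1 M\<^sub>1"
    using prog_start by blast
  then obtain M where run\<^sub>2: "runs forest_prog (prog_cells N) (7, M\<^sub>1)
      ((\<Sum>m=1..N. 19 + (N + 1) * (29 + 36 * (N div m))) + 4) (85, M)"
    and table: "table_ok N (table_keys N) M"
    using outer_loop by blast
  have "7 + ((\<Sum>m=1..N. 19 + (N + 1) * (29 + 36 * (N div m))) + 4) = prog_time N"
    by (simp add: prog_time_def)
  then have "runs forest_prog (prog_cells N) (init N) (prog_time N) (85, M)"
    using runs_trans[OF run\<^sub>1 run\<^sub>2] by metis
  moreover have "halted forest_prog (85, M)"
    by (simp add: halted_def forest_prog_nth)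
  ultimately show ?thesis
    using runs_to_halted table by blast
qed

fun query_key :: "query \<Rightarrow> nat \<times> nat \<times> nat \<times> nat" where
  "query_key (QRt n) = (0, n - 1, n - 1, 0)"
| "query_key (QF n) = (0, n, n, 0)"
| "query_key (QFm n m) = (2, n, m, n div m)"
| "query_key (QFle n m) = (0, n, m, 0)"
| "query_key (QFmmu n m \<mu>) = (1, n, m, \<mu>)"
| "query_key (QFlemu n m \<mu>) = (2, n, m, \<mu>)"
| "query_key (QBin m \<mu>) = (3, 0, m, \<mu>)"

lemma query_key_correct:
  assumes "valid_query N q"
  shows "query_key q \<in> table_keys N \<and> table_value (query_key q) = qval q"
proof (cases q)
  case (QRt n)
  then show ?thesis
    using assms rt_Suc[of "n - 1"] f_eq_f_le_m[of "n - 1"] by (auto simp: table_keys_def table_value_def)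
next
  case (QFm n m)
  then have "1 \<le> n div m" "n div m * m \<le> n"
    using assms by (simp_all add: less_eq_div_iff_mult_less_eq div_times_less_eq_dividend)
  then show ?thesis
    using assms QFm f_m_eq_f_le_m_mu[of n m] by (auto simp: table_keys_def table_value_def)
qed (use assms in \<open>auto simp: table_keys_def table_value_def f_eq_f_le_m\<close>)

section \<open>Time and space bounds\<close>

definition div_sum :: "nat \<Rightarrow> nat" where
  "div_sum N = (\<Sum>b=1..N. N div b)"

definition products_le :: "nat \<Rightarrow> (nat \<times> nat) set" where
  "products_le N = {(b, c). 1 \<le> b \<and> 1 \<le> c \<and> c * b \<le> N}"

lemma products_le_eq_Sigma: "products_le N = Sigma {1..N} (\<lambda>b. {1..N div b})"
proof -
  have "c * b \<le> N \<longleftrightarrow> b \<le> N \<and> c \<le> N div b" if "1 \<le> b" "1 \<le> c" for b c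
    using that by (metis less_eq_div_iff_mult_less_eq mult_le_mono1 mult_1 le_trans not_one_le_zero
        neq0_conv)
  then show ?thesis
    by (auto simp: products_le_def)
qed

lemma card_products_le: "card (products_le N) = div_sum N"
  unfolding products_le_eq_Sigma div_sum_def by (subst card_SigmaI) auto

lemma table_keys_subset: "table_keys N \<subseteq> {..3} \<times> {..N} \<times> ({..N} \<times> {0} \<union> products_le N)"
  by (auto simp: table_keys_def products_le_def)

lemma card_prog_cells: "card (prog_cells N) \<le> 16 + 4 * ((N + 1) * (N + 1 + div_sum N))"
proof -
  define U where "U = {..N} \<times> {0 :: nat} \<union> products_le N"
  have fin: "finite ({..3 :: nat} \<times> {..N} \<times> U)"
    unfolding U_def products_le_eq_Sigma by auto
  have "card U \<le> N + 1 + div_sum N"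
    using card_Un_le[of "{..N} \<times> {0 :: nat}" "products_le N"]
    by (simp add: U_def card_cartesian_product card_products_le)
  then have "4 * ((N + 1) * card U) \<le> 4 * ((N + 1) * (N + 1 + div_sum N))"
    by (intro mult_le_mono2)
  then have "card ({..3 :: nat} \<times> {..N} \<times> U) \<le> 4 * ((N + 1) * (N + 1 + div_sum N))"
    by (simp add: card_cartesian_product)
  moreover have sub: "table_keys N \<subseteq> {..3} \<times> {..N} \<times> U"
    using table_keys_subset unfolding U_def .
  have "card (table_addr (N + 1) ` table_keys N) \<le> card ({..3 :: nat} \<times> {..N} \<times> U)"
    by (rule le_trans[OF card_image_le[OF finite_subset[OF sub fin]] card_mono[OF fin sub]])
  moreover have "card (prog_cells N) \<le> 16 + card (table_addr (N + 1) ` table_keys N)"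
    unfolding prog_cells_def using card_Un_le[of "{..<16 :: nat}"] by simp
  ultimately show ?thesis
    by linarith
qed

lemma finite_prog_cells: "finite (prog_cells N)"
proof -
  have "finite ({..3 :: nat} \<times> {..N} \<times> ({..N} \<times> {0 :: nat} \<union> products_le N))"
    unfolding products_le_eq_Sigma by auto
  then have "finite (table_keys N)"
    by (rule finite_subset[OF table_keys_subset])
  then show ?thesis
    unfolding prog_cells_def by simp
qed

lemma prog_time_le: "prog_time N \<le> 11 + 84 * ((N + 1) * (N + 1 + div_sum N))"
proof -
  have "prog_time N = 11 + N * (19 + 29 * (N + 1)) + 36 * ((N + 1) * div_sum N)"
    by (simp add: prog_time_def sum.distrib sum_distrib_left sum_distrib_right div_sum_def algebra_simps)
  moreover have "N * (19 + 29 * (N + 1)) \<le> (N + 1) * (48 * (N + 1))"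
    by (rule mult_le_mono) simp_all
  ultimately show ?thesis
    by (simp add: algebra_simps)
qed

lemma harmonic_le_1_plus_ln: "N \<ge> 1 \<Longrightarrow> (\<Sum>b=1..N. 1 / real b) \<le> 1 + ln (real N)"
proof (induction N rule: nat_induct_at_least)
  case (Suc n)
  have n: "real n \<ge> 1"
    using Suc(1) by simp
  have "ln (real n / real (Suc n)) \<le> real n / real (Suc n) - 1"
    by (rule ln_le_minus_one) (use n in simp)
  also have "\<dots> = - (1 / real (Suc n))"
    by (simp add: field_simps)
  finally have "1 / real (Suc n) \<le> ln (real (Suc n)) - ln (real n)"
    using n by (simp add: ln_div)
  then show ?case
    using Suc(2) by simp
qed simp

lemma div_sum_le: "N \<ge> 1 \<Longrightarrow> real (div_sum N) \<le> real N * (1 + ln (real N))"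
proof -
  assume N: "N \<ge> 1"
  have "real (div_sum N) = (\<Sum>b=1..N. real (N div b))"
    by (simp add: div_sum_def)
  also have "\<dots> \<le> (\<Sum>b=1..N. real N * (1 / real b))"
    by (intro sum_mono) (simp add: of_nat_div_le_of_nat)
  also have "\<dots> = real N * (\<Sum>b=1..N. 1 / real b)"
    by (simp add: sum_distrib_left)
  also have "\<dots> \<le> real N * (1 + ln (real N))"
    by (intro mult_left_mono harmonic_le_1_plus_ln N) simp
  finally show ?thesis .
qed

lemma budget_le:
  assumes "N \<ge> 3"
  shows "real ((N + 1) * (N + 1 + div_sum N)) \<le> 8 * (real N ^ 2 * ln (real N))"
proof -
  define x L where "x = real N" and "L = ln (real N)"
  have x: "x \<ge> 3"
    using assms by (simp add: x_def)
  have L: "L \<ge> 1"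
    using x exp_le by (simp add: L_def x_def ln_ge_iff)
  have xL: "x \<le> x * L"
    using x L mult_left_mono[of 1 L x] by simp
  have "real (div_sum N) \<le> x + x * L"
    using div_sum_le[of N] assms by (simp add: x_def L_def algebra_simps)
  then have "x + 1 + real (div_sum N) \<le> 4 * (x * L)"
    using x xL by linarith
  moreover have "x + 1 \<le> 2 * x"
    using x by simp
  ultimately have "(x + 1) * (x + 1 + real (div_sum N)) \<le> (2 * x) * (4 * (x * L))"
    using x by (intro mult_mono) auto
  then show ?thesis
    by (simp add: x_def L_def power2_eq_square algebra_simps)
qed

lemma budget_bigo:
  "(\<lambda>N. real (a + b * ((N + 1) * (N + 1 + div_sum N)))) \<in> O(\<lambda>N. real N ^ 2 * ln (real N))"
proof (rule bigoI)
  have "real (a + b * ((N + 1) * (N + 1 + div_sum N))) \<le> (a + 8 * b) * (real N ^ 2 * ln (real N))"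
    if N: "N \<ge> 3" for N
  proof -
    have "1 \<le> ln (real N)"
      using N exp_le by (simp add: ln_ge_iff)
    moreover have "1 \<le> real N ^ 2"
      using N by simp
    ultimately have P: "1 \<le> real N ^ 2 * ln (real N)"
      using mult_mono[of 1 "real N ^ 2" 1 "ln (real N)"] by simp
    have "real a * 1 \<le> real a * (real N ^ 2 * ln (real N))"
      using P by (intro mult_left_mono) auto
    moreover have "real b * real ((N + 1) * (N + 1 + div_sum N)) \<le> real b * (8 * (real N ^ 2 * ln (real N)))"
      using budget_le[OF N] by (intro mult_left_mono) auto
    ultimately show ?thesis
      by (simp add: algebra_simps)
  qed
  moreover have "0 \<le> real N ^ 2 * ln (real N)" if "N \<ge> 3" for N
    using that by simp
  ultimately show "\<forall>\<^sub>F N in at_top. norm (real (a + b * ((N + 1) * (N + 1 + div_sum N)))) \<le>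
      real (a + 8 * b) * norm (real N ^ 2 * ln (real N))"
    unfolding eventually_at_top_linorder by (intro exI[of _ 3]) auto
qed

theorem lemma3p4:
  "\<exists>(P :: prog) (addr :: nat \<Rightarrow> query \<Rightarrow> nat) (T :: nat \<Rightarrow> nat) (S :: nat \<Rightarrow> nat).
     (\<forall>N \<ge> 1.
        halted P (exec P (T N) (init N)) \<and>
        card (used_cells P (T N) (init N)) \<le> S N \<and>
        (\<forall>q. valid_query N q \<longrightarrow> snd (exec P (T N) (init N)) (addr N q) = qval q)) \<and>
     (\<lambda>N. real (T N)) \<in> O(\<lambda>N. real N ^ 2 * ln (real N)) \<and>
     (\<lambda>N. real (S N)) \<in> O(\<lambda>N. real N ^ 2 * ln (real N))"
proof (intro exI conjI allI impI)
  fix N q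
  obtain M where final: "exec forest_prog (prog_time N) (init N) = (85, M)"
    and cells: "accessed_upto forest_prog (prog_time N) (init N) \<subseteq> prog_cells N"
    and table: "table_ok N (table_keys N) M"
    using forest_prog_final by blast
  show "halted forest_prog (exec forest_prog (prog_time N) (init N))"
    using final by (simp add: halted_def forest_prog_nth)
  have "used_cells forest_prog (prog_time N) (init N) \<subseteq> prog_cells N"
    using cells register_in_prog_cells by (auto simp: used_cells_def accessed_upto_def)
  then show "card (used_cells forest_prog (prog_time N) (init N)) \<le> 16 + 4 * ((N + 1) * (N + 1 + div_sum N))"
    using card_mono[OF finite_prog_cells] card_prog_cells le_trans by blast
  show "valid_query N q \<Longrightarrow> snd (exec forest_prog (prog_time N) (init N)) (table_addr (N + 1) (query_key q)) = qval q"
    using final table query_key_correct by (simp add: table_ok_def)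
next
  have "(\<lambda>N. real (prog_time N)) \<in> O(\<lambda>N. real (11 + 84 * ((N + 1) * (N + 1 + div_sum N))))"
    by (intro landau_o.big_mono always_eventually allI) (metis norm_of_nat of_nat_le_iff prog_time_le)
  then show "(\<lambda>N. real (prog_time N)) \<in> O(\<lambda>N. real N ^ 2 * ln (real N))"
    using budget_bigo landau_o.big_trans by blast
qed (rule budget_bigo)

end
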